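(* Let $\Omega\subset\mathbb R^n$ be a bounded Lipschitz domain, $G$ a compact matrix Lie group with Lie algebra $\mathfrak g$, and let $A(t)\in\Lambda^1(\overline\Omega,\mathfrak g)$ and $\phi(t)\in\Lambda^0(\overline\Omega,\mathfrak g)$ be smooth, smoothly time-dependent $\mathfrak g$-valued forms. Put $E=-(\dot A+d_A\phi)$, $B=F_A$, $D=\epsilon E$, $H=\mu^{-1}B$, where $\epsilon,\mu^{-1}$ are smooth, time-independent symmetric isomorphisms as in the context. Suppose that $$\dot D-[\phi,D]=d_AH,\qquad d_AD=\rho .$$ Then $\rho$ satisfies $\dot\rho=[\phi,\rho]$. In particular, $|\rho|$ is conserved, i.e. at each point of $\overline\Omega$ the quantity $|\rho|$, defined by $|\rho|^2\,d\mathrm{vol}=\langle\rho\wedge *\rho\rangle$ with $*$ the Hodge star, is independent of $t$.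
   Context: $G$ is a compact Lie group realized as a group of unitary matrices; its Lie algebra $\mathfrak g$ consists of skew-Hermitian matrices with bracket $[\xi,\eta]=\xi\eta-\eta\xi$ and invariant inner product $\langle\xi,\eta\rangle=\operatorname{tr}(\xi^*\eta)$ (so $\langle[\xi,\eta],\omega\rangle+\langle\eta,[\xi,\omega]\rangle=0$). $\Lambda^k(\overline\Omega,\mathfrak g)$ denotes sections of $\bigwedge^kT^*\overline\Omega\otimes\mathfrak g$. For $u=\alpha\otimes\xi$, $v=\beta\otimes\eta$ (real forms $\alpha,\beta$, constant $\xi,\eta\in\mathfrak g$) define $du=d\alpha\otimes\xi$, $[u\wedge v]=(\alpha\wedge\beta)\otimes[\xi,\eta]$, $\langle u\wedge v\rangle=(\alpha\wedge\beta)\langle\xi,\eta\rangle$ (a real form), extended bilinearly; when one argument is a $0$-form one writes $[\cdot,\cdot]$, $\langle\cdot,\cdot\rangle$. For $A\in\Lambda^1(\overline\Omega,\mathfrak g)$, the curvature is $F_A=dA+\tfrac12[A\wedge A]$ and the exterior covariant derivative is $d_Au=du+[A\wedge u]$. The permittivity $\epsilon$ and inverse permeability $\mu^{-1}$ are pointwise isomorphisms $\epsilon_x:\bigwedge^1T_x^*\overline\Omega\to\bigwedge^{n-1}T_x^*\overline\Omega$, $\mu^{-1}_x:\bigwedge^2T_x^*\overline\Omega\to\bigwedge^{n-2}T_x^*\overline\Omega$ that are symmetric in the sense $\alpha\wedge\epsilon\beta=\beta\wedge\epsilon\alpha$ for real $1$-forms and $\alpha\wedge\mu^{-1}\beta=\beta\wedge\mu^{-1}\alpha$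 for real $2$-forms; they act on $\mathfrak g$-valued forms by acting on the form factor, $\epsilon(\alpha\otimes\xi)=\epsilon\alpha\otimes\xi$. Dots denote time derivatives. *)

theory Defs
  imports "HOL-Analysis.Analysis"
begin

fun Ck :: "nat \<Rightarrow> ('a::euclidean_space \<Rightarrow> 'b::real_normed_vector) \<Rightarrow> bool" where
  "Ck 0 f = continuous_on UNIV f"
| "Ck (Suc k) f = (f differentiable_on UNIV \<and>
       (\<forall>v. Ck k (\<lambda>x. frechet_derivative f (at x) v)))"

definition smooth_fun :: "('a::euclidean_space \<Rightarrow> 'b::real_normed_vector) \<Rightarrow> bool" where
  "smooth_fun f \<longleftrightarrow> (\<forall>k. Ck k f)"

definition lipschitz_boundary :: "((real, 'n::finite) vec) set \<Rightarrow> bool" where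
  "lipschitz_boundary \<Omega> \<longleftrightarrow>
    (\<forall>p\<in>frontier \<Omega>. \<exists>e r L h. norm e = 1 \<and> r > 0 \<and>
        L-lipschitz_on {y. y \<bullet> e = 0} h \<and>
        \<Omega> \<inter> ball p r = {x \<in> ball p r. (x - p) \<bullet> e < h ((x - p) - ((x - p) \<bullet> e) *\<^sub>R e)})"

definition bounded_lipschitz_domain :: "((real, 'n::finite) vec) set \<Rightarrow> bool" where
  "bounded_lipschitz_domain \<Omega> \<longleftrightarrow>
     open \<Omega> \<and> connected \<Omega> \<and> \<Omega> \<noteq> {} \<and> bounded \<Omega> \<and> lipschitz_boundary \<Omega>"

definition madj :: "complex^'m^'m \<Rightarrow> complex^'m^'m" where
  "madj a = (\<chi> i j. cnj (a $ j $ i))"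

definition mtrace :: "complex^'m^'m \<Rightarrow> complex" where
  "mtrace a = (\<Sum>i\<in>UNIV. a $ i $ i)"

definition unitary_mat :: "complex^'m^'m \<Rightarrow> bool" where
  "unitary_mat u \<longleftrightarrow> madj u ** u = mat 1 \<and> u ** madj u = mat 1"

text \<open>A compact matrix Lie group realized as a group of unitary matrices.\<close>
definition compact_unitary_group :: "(complex^'m^'m) set \<Rightarrow> bool" where
  "compact_unitary_group G \<longleftrightarrow>
     (\<forall>u\<in>G. unitary_mat u) \<and> mat 1 \<in> G \<and>
     (\<forall>u\<in>G. \<forall>v\<in>G. u ** v \<in> G) \<and> (\<forall>u\<in>G. madj u \<in> G) \<and> compact G"

definition lie_algebra :: "(complex^'m^'m) set \<Rightarrow> (complex^'m^'m) set" where
  "lie_algebra G = {v. \<exists>\<gamma>. \<gamma> 0 = mat 1 \<and> (\<forall>s. \<gamma> s \<in> G) \<and>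
                          (\<gamma> has_vector_derivative v) (at 0)}"

definition lbr_mat :: "complex^'m^'m \<Rightarrow> complex^'m^'m \<Rightarrow> complex^'m^'m" where
  "lbr_mat a b = a ** b - b ** a"

definition ip_mat :: "complex^'m^'m \<Rightarrow> complex^'m^'m \<Rightarrow> real" where
  "ip_mat a b = Re (mtrace (madj a ** b))"

text \<open>A (possibly inhomogeneous) form at a point is a function from index sets
  I \<subseteq> {1..n} (ordered increasingly) to coefficients: the coefficient of
  dx_{i1} \<and> ... \<and> dx_{ik}, i1 < ... < ik, I = {i1..ik}.\<close>

definition perm_sign :: "'n::linorder set \<Rightarrow> 'n set \<Rightarrow> real" where
  "perm_sign J K = (-1) ^ card {(a, b). a \<in> J \<and> b \<in> K \<and> b < a}"

definition wedge_with :: "('a \<Rightarrow> 'b \<Rightarrow> 'c::real_vector) \<Rightarrow>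
    ('n::{finite,linorder} set \<Rightarrow> 'a) \<Rightarrow> ('n set \<Rightarrow> 'b) \<Rightarrow> 'n set \<Rightarrow> 'c" where
  "wedge_with f u v I = (\<Sum>J\<in>Pow I. perm_sign J (I - J) *\<^sub>R f (u J) (v (I - J)))"

definition homog :: "(nat \<Rightarrow> bool) \<Rightarrow> ('n set \<Rightarrow> 'c::zero) \<Rightarrow> bool" where
  "homog P \<alpha> \<longleftrightarrow> (\<forall>I. \<not> P (card I) \<longrightarrow> \<alpha> I = 0)"

text \<open>Time-dependent g-valued forms on R^n (fields): coefficient, point x, time t.\<close>
type_synonym ('n, 'm) field = "'n set \<Rightarrow> (real, 'n) vec \<Rightarrow> real \<Rightarrow> complex^'m^'m"

definition pd :: "'n::finite \<Rightarrow> ((real, 'n) vec \<Rightarrow> real \<Rightarrow> 'c::real_normed_vector) \<Rightarrow> (real, 'n) vec \<Rightarrow> real \<Rightarrow> 'c" where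
  "pd i f x t = vector_derivative (\<lambda>s. f (x + s *\<^sub>R axis i 1) t) (at 0)"

definition tderiv :: "('n, 'm::finite) field \<Rightarrow> ('n, 'm) field" where
  "tderiv u = (\<lambda>I x t. vector_derivative (\<lambda>s. u I x s) (at t))"

definition dext :: "('n::{finite,linorder}, 'm::finite) field \<Rightarrow> ('n, 'm) field" where
  "dext u = (\<lambda>I x t. \<Sum>i\<in>I. (-1) ^ card {j\<in>I. j < i} *\<^sub>R pd i (u (I - {i})) x t)"

definition lbr :: "('n::{finite,linorder}, 'm::finite) field \<Rightarrow> ('n, 'm) field \<Rightarrow> ('n, 'm) field" where
  "lbr u v = (\<lambda>I x t. wedge_with lbr_mat (\<lambda>K. u K x t) (\<lambda>K. v K x t) I)"

definition ipw :: "('n::{finite,linorder}, 'm::finite) field \<Rightarrow> ('n, 'm) field \<Rightarrow>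
    'n set \<Rightarrow> (real, 'n) vec \<Rightarrow> real \<Rightarrow> real" where
  "ipw u v = (\<lambda>I x t. wedge_with ip_mat (\<lambda>K. u K x t) (\<lambda>K. v K x t) I)"

definition cov_d :: "('n::{finite,linorder}, 'm::finite) field \<Rightarrow> ('n, 'm) field \<Rightarrow> ('n, 'm) field" where
  "cov_d A u = (\<lambda>I x t. dext u I x t + lbr A u I x t)"

definition curvature :: "('n::{finite,linorder}, 'm::finite) field \<Rightarrow> ('n, 'm) field" where
  "curvature A = (\<lambda>I x t. dext A I x t + (1/2) *\<^sub>R lbr A A I x t)"

definition op_pt :: "((real, 'n::finite) vec \<Rightarrow> 'n set \<Rightarrow> 'n set \<Rightarrow> real) \<Rightarrow> (real, 'n) vec \<Rightarrow>
    ('n set \<Rightarrow> real) \<Rightarrow> 'n set \<Rightarrow> real" where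
  "op_pt c x \<alpha> = (\<lambda>J. \<Sum>I\<in>UNIV. c x J I * \<alpha> I)"

definition op_field :: "((real, 'n::finite) vec \<Rightarrow> 'n set \<Rightarrow> 'n set \<Rightarrow> real) \<Rightarrow>
    ('n, 'm::finite) field \<Rightarrow> ('n, 'm) field" where
  "op_field c u = (\<lambda>J x t. \<Sum>I\<in>UNIV. c x J I *\<^sub>R u I x t)"

definition sym_iso_field :: "nat \<Rightarrow> ((real, 'n::{finite,linorder}) vec) set \<Rightarrow>
    ((real, 'n) vec \<Rightarrow> 'n set \<Rightarrow> 'n set \<Rightarrow> real) \<Rightarrow> bool" where
  "sym_iso_field k S c \<longleftrightarrow>
     (\<forall>J I. smooth_fun (\<lambda>x. c x J I)) \<and>
     (\<forall>x J I. c x J I \<noteq> 0 \<longrightarrow> card I = k \<and> card J + k = CARD('n)) \<and>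
     (\<forall>x\<in>S. bij_betw (op_pt c x) {\<alpha>. homog (\<lambda>j. j = k) \<alpha>}
                                  {\<beta>. homog (\<lambda>j. j + k = CARD('n)) \<beta>}) \<and>
     (\<forall>x\<in>S. \<forall>\<alpha> \<beta>. homog (\<lambda>j. j = k) \<alpha> \<longrightarrow> homog (\<lambda>j. j = k) \<beta> \<longrightarrow>
         wedge_with (*) \<alpha> (op_pt c x \<beta>) = wedge_with (*) \<beta> (op_pt c x \<alpha>))"

definition hodge :: "('n::{finite,linorder}, 'm::finite) field \<Rightarrow> ('n, 'm) field" where
  "hodge u = (\<lambda>J x t. perm_sign (- J) J *\<^sub>R u (- J) x t)"

text \<open>|\<rho>|, defined by |\<rho>|^2 dvol = <\<rho> \<and> *\<rho>>; dvol = dx_1 \<and> ... \<and> dx_n.\<close>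
definition fnorm :: "('n::{finite,linorder}, 'm::finite) field \<Rightarrow> (real, 'n) vec \<Rightarrow> real \<Rightarrow> real" where
  "fnorm \<rho> x t = sqrt (ipw \<rho> (hodge \<rho>) UNIV x t)"

definition smooth_field :: "('n::finite, 'm::finite) field \<Rightarrow> bool" where
  "smooth_field u \<longleftrightarrow> (\<forall>I. smooth_fun (\<lambda>(x, t). u I x t))"

end

theory Submission
  imports Defs
begin

text \<open>Differentiating Gauss's law \<open>\<rho> = d\<^sub>A D\<close> in time and inserting the evolution law
  \<open>\<partial>\<^sub>t D = [\<phi>, D] + d\<^sub>A H\<close> gives, by the graded Leibniz and Jacobi identities and
  \<open>d\<^sub>A d\<^sub>A H = [F\<^sub>A \<and> H]\<close>,
  \<open>\<partial>\<^sub>t \<rho> = [\<phi>, \<rho>] - [E \<and> D] + [B \<and> H]\<close>.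
  Both brackets vanish: in \<open>[E \<and> \<epsilon>E]\<close> the coefficient of \<open>[e\<^sub>a, e\<^sub>b]\<close> is symmetric in \<open>a, b\<close>
  by the symmetry of \<open>\<epsilon>\<close>, while the bracket is antisymmetric; likewise for \<open>[B \<and> \<mu>\<^sup>-\<^sup>1B]\<close>.
  Finally \<open>\<phi>\<close> is skew-Hermitian, so \<open>ad \<phi>\<close> is skew for the trace inner product and
  \<open>\<partial>\<^sub>t \<rho> = [\<phi>, \<rho>]\<close> preserves \<open>|\<rho>|\<close>.\<close>

section \<open>Smooth maps\<close>

lemma Ck_Suc_imp_Ck: "Ck (Suc k) f \<Longrightarrow> Ck k f"
proof (induction k arbitrary: f)
  case 0
  then show ?case by (simp add: differentiable_imp_continuous_on)
next
  case (Suc k)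
  then show ?case by simp
qed

lemma Ck_const: "Ck k (\<lambda>x. c)"
  by (induction k arbitrary: c) auto

lemma Ck_add: "Ck k f \<Longrightarrow> Ck k g \<Longrightarrow> Ck k (\<lambda>x. f x + g x)"
proof (induction k arbitrary: f g)
  case 0
  then show ?case by (auto intro: continuous_on_add)
next
  case (Suc k)
  have df: "f differentiable at x" and dg: "g differentiable at x" for x
    using Suc.prems by (auto simp: differentiable_on_def)
  have fd: "frechet_derivative (\<lambda>x. f x + g x) (at x) v =
     frechet_derivative f (at x) v + frechet_derivative g (at x) v" for x v
  proof -
    have "((\<lambda>x. f x + g x) has_derivative
        (\<lambda>h. frechet_derivative f (at x) h + frechet_derivative g (at x) h)) (at x)"
      using df dg by (intro has_derivative_add) (auto simp: frechet_derivative_works)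
    from frechet_derivative_at[OF this] show ?thesis by metis
  qed
  show ?case using Suc by (auto simp: fd differentiable_on_def intro!: differentiable_add)
qed

lemma Ck_sum: "finite S \<Longrightarrow> (\<And>i. i \<in> S \<Longrightarrow> Ck k (f i)) \<Longrightarrow> Ck k (\<lambda>x. \<Sum>i\<in>S. f i x)"
  by (induction S rule: finite_induct) (simp_all add: Ck_const Ck_add)

lemma Ck_bilinear:
  fixes prod :: "'b::real_normed_vector \<Rightarrow> 'c::real_normed_vector \<Rightarrow> 'd::real_normed_vector"
    and f :: "'a::euclidean_space \<Rightarrow> 'b" and g :: "'a \<Rightarrow> 'c"
  assumes "bounded_bilinear prod"
  shows "Ck k f \<Longrightarrow> Ck k g \<Longrightarrow> Ck k (\<lambda>x. prod (f x) (g x))"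
proof (induction k arbitrary: f g)
  case 0
  then show ?case using bounded_bilinear.continuous_on[OF assms] by auto
next
  case (Suc k)
  have df: "f differentiable at x" and dg: "g differentiable at x" for x
    using Suc.prems by (auto simp: differentiable_on_def)
  have hd: "((\<lambda>x. prod (f x) (g x)) has_derivative
      (\<lambda>h. prod (f x) (frechet_derivative g (at x) h) + prod (frechet_derivative f (at x) h) (g x))) (at x)"
    for x using df dg
    by (intro bounded_bilinear.FDERIV[OF assms]) (auto simp: frechet_derivative_works)
  have fd: "frechet_derivative (\<lambda>x. prod (f x) (g x)) (at x) v =
     prod (f x) (frechet_derivative g (at x) v) + prod (frechet_derivative f (at x) v) (g x)" for x v
    using frechet_derivative_at[OF hd[of x]] by metis
  have "Ck k f" "Ck k g" "Ck k (\<lambda>x. frechet_derivative f (at x) v)"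
    "Ck k (\<lambda>x. frechet_derivative g (at x) v)" for v
    using Suc.prems Ck_Suc_imp_Ck by auto
  then have "Ck k (\<lambda>x. prod (f x) (frechet_derivative g (at x) v) +
      prod (frechet_derivative f (at x) v) (g x))" for v
    by (intro Ck_add Suc.IH)
  moreover have "(\<lambda>x. prod (f x) (g x)) differentiable at x" for x
    using hd by (rule differentiableI)
  ultimately show ?case
    by (simp add: fd differentiable_on_def)
qed

lemma Ck_scaleR: "Ck k g \<Longrightarrow> Ck k (\<lambda>p. c *\<^sub>R g p)"
  using Ck_bilinear[OF bounded_bilinear_scaleR Ck_const] by blast

lemma Ck_linear_comp:
  fixes L :: "'c::euclidean_space \<Rightarrow> 'a::euclidean_space"
  assumes L: "bounded_linear L"
  shows "Ck k f \<Longrightarrow> Ck k (\<lambda>x. f (L x))"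
proof (induction k arbitrary: f)
  case 0
  then show ?case
    by (auto intro!: continuous_on_compose2[OF _ linear_continuous_on[OF L]])
next
  case (Suc k)
  have hd: "((\<lambda>x. f (L x)) has_derivative (\<lambda>h. frechet_derivative f (at (L x)) (L h))) (at x)" for x
  proof -
    have "(f has_derivative frechet_derivative f (at (L x))) (at (L x))"
      using Suc.prems by (simp add: differentiable_on_def frechet_derivative_works)
    from diff_chain_at[OF bounded_linear_imp_has_derivative[OF L] this]
    show ?thesis by (simp add: o_def)
  qed
  have fd: "frechet_derivative (\<lambda>x. f (L x)) (at x) v = frechet_derivative f (at (L x)) (L v)" for x v
    using frechet_derivative_at[OF hd[of x]] by metis
  have "Ck k (\<lambda>x. frechet_derivative f (at (L x)) (L v))" for v
    by (rule Suc.IH) (use Suc.prems in auto)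
  moreover have "(\<lambda>x. f (L x)) differentiable at x" for x
    using hd by (rule differentiableI)
  ultimately show ?case
    by (simp add: fd differentiable_on_def)
qed

lemma has_vector_derivative_along_line:
  assumes "g differentiable at (p + s *\<^sub>R w)"
  shows "((\<lambda>s. g (p + s *\<^sub>R w)) has_vector_derivative frechet_derivative g (at (p + s *\<^sub>R w)) w)
    (at s within S)"
proof -
  have l: "((\<lambda>s. p + s *\<^sub>R w) has_derivative (\<lambda>h. h *\<^sub>R w)) (at s within S)"
    by (auto intro!: derivative_eq_intros)
  have g: "(g has_derivative frechet_derivative g (at (p + s *\<^sub>R w)))
      (at (p + s *\<^sub>R w) within (\<lambda>s. p + s *\<^sub>R w) ` S)"
    using assms frechet_derivative_works has_derivative_at_withinI by blast
  have lin: "linear (frechet_derivative g (at (p + s *\<^sub>R w)))"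
    using assms by (rule linear_frechet_derivative)
  from diff_chain_within[OF l g] show ?thesis
    unfolding has_vector_derivative_def o_def
    by (rule has_derivative_eq_rhs) (simp add: linear_scale[OF lin])
qed

lemma has_vector_derivative_along_line_0:
  "g differentiable at p \<Longrightarrow>
    ((\<lambda>s. g (p + s *\<^sub>R w)) has_vector_derivative frechet_derivative g (at p) w) (at 0 within S)"
  using has_vector_derivative_along_line[of g p 0 w S] by simp

text \<open>Differentiating under the integral sign in the direction \<open>v\<close> turns the fundamental
  theorem of calculus along \<open>w\<close> into a formula for the increment of \<open>D\<^sub>v f\<close> along \<open>w\<close>.\<close>
lemma frechet_derivative_increment_integral:
  fixes f :: "'a::euclidean_space \<Rightarrow> 'b::euclidean_space"
  assumes C2: "Ck 2 f" and a: "0 \<le> a"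
  shows "frechet_derivative f (at (x + a *\<^sub>R w)) v - frechet_derivative f (at x) v =
    integral {0..a} (\<lambda>s. frechet_derivative (\<lambda>p. frechet_derivative f (at p) w) (at (x + s *\<^sub>R w)) v)"
proof -
  define Dw where "Dw = (\<lambda>p. frechet_derivative f (at p) w)"
  have fdiff: "f differentiable at p" for p
    using C2 by (simp add: numeral_2_eq_2 differentiable_on_def)
  have Dwdiff: "Dw differentiable at p" for p
    using C2 by (simp add: numeral_2_eq_2 differentiable_on_def Dw_def)
  have Dwcont: "continuous_on UNIV Dw"
    by (simp add: differentiable_imp_continuous_on differentiable_on_def Dwdiff)
  have DDcont: "continuous_on UNIV (\<lambda>p. frechet_derivative Dw (at p) v)"
    using C2 by (simp add: numeral_2_eq_2 Dw_def)
  have ftc: "integral {0..a} (\<lambda>s. Dw (p + s *\<^sub>R w)) = f (p + a *\<^sub>R w) - f p" for p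
    using fundamental_theorem_of_calculus[OF a has_vector_derivative_along_line[OF fdiff]]
    by (simp add: Dw_def integral_unique)
  have lhs: "((\<lambda>b. f (x + a *\<^sub>R w + b *\<^sub>R v) - f (x + b *\<^sub>R v)) has_vector_derivative
      frechet_derivative f (at (x + a *\<^sub>R w)) v - frechet_derivative f (at x) v) (at 0)"
    by (intro has_vector_derivative_diff has_vector_derivative_along_line_0 fdiff)
  have rhs: "((\<lambda>b. integral (cbox 0 a) (\<lambda>s. Dw (x + s *\<^sub>R w + b *\<^sub>R v))) has_vector_derivative
      integral (cbox 0 a) (\<lambda>s. frechet_derivative Dw (at (x + s *\<^sub>R w + 0 *\<^sub>R v)) v)) (at 0 within UNIV)"
  proof (rule leibniz_rule_vector_derivative)
    show "((\<lambda>b. Dw (x + s *\<^sub>R w + b *\<^sub>R v)) has_vector_derivative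
        frechet_derivative Dw (at (x + s *\<^sub>R w + b *\<^sub>R v)) v) (at b within UNIV)" for b s
      by (rule has_vector_derivative_along_line[OF Dwdiff])
    show "(\<lambda>s. Dw (x + s *\<^sub>R w + b *\<^sub>R v)) integrable_on cbox 0 a" for b
      by (rule integrable_continuous)
        (rule continuous_on_compose2[OF Dwcont], auto intro!: continuous_intros)
    show "continuous_on (UNIV \<times> cbox 0 a)
        (\<lambda>(b, s). frechet_derivative Dw (at (x + s *\<^sub>R w + b *\<^sub>R v)) v)"
      unfolding split_beta
      by (rule continuous_on_compose2[OF DDcont]) (auto intro!: continuous_intros)
  qed auto
  have "integral (cbox 0 a) (\<lambda>s. Dw (x + s *\<^sub>R w + b *\<^sub>R v)) =
      f (x + a *\<^sub>R w + b *\<^sub>R v) - f (x + b *\<^sub>R v)" for b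
    using ftc[of "x + b *\<^sub>R v"] by (simp add: add_ac)
  with vector_derivative_unique_at[OF lhs] rhs show ?thesis
    by (simp add: Dw_def)
qed

text \<open>Schwarz's theorem: the increment of \<open>D\<^sub>v f\<close> along \<open>w\<close> has derivative \<open>D\<^sub>w D\<^sub>v f\<close> directly
  and \<open>D\<^sub>v D\<^sub>w f\<close> through its integral representation.\<close>
lemma frechet_derivative_commute:
  fixes f :: "'a::euclidean_space \<Rightarrow> 'b::euclidean_space"
  assumes C2: "Ck 2 f"
  shows "frechet_derivative (\<lambda>p. frechet_derivative f (at p) v) (at x) w =
         frechet_derivative (\<lambda>p. frechet_derivative f (at p) w) (at x) v"
proof -
  define DD where "DD u w p = frechet_derivative (\<lambda>p. frechet_derivative f (at p) u) (at p) w" for u w p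
  have Dvdiff: "(\<lambda>p. frechet_derivative f (at p) v) differentiable at p" for p
    using C2 by (simp add: numeral_2_eq_2 differentiable_on_def)
  have DDcont: "continuous_on UNIV (DD w v)"
    using C2 by (simp add: numeral_2_eq_2 DD_def)
  have DD_line: "continuous_on {0..1} (\<lambda>s. DD w v (x + s *\<^sub>R w))"
    by (rule continuous_on_compose2[OF DDcont]) (auto intro!: continuous_intros)
  have deriv_integral: "((\<lambda>a. frechet_derivative f (at x) v + integral {0..a} (\<lambda>s. DD w v (x + s *\<^sub>R w)))
      has_vector_derivative DD w v (x + 0 *\<^sub>R w)) (at 0 within {0..1})"
    using has_vector_derivative_add[OF has_vector_derivative_const
        integral_has_vector_derivative[OF DD_line, of 0]] by simp
  have deriv_direct: "((\<lambda>a. frechet_derivative f (at (x + a *\<^sub>R w)) v) has_vector_derivative DD v w x)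
      (at 0 within {0..1})"
    unfolding DD_def by (rule has_vector_derivative_along_line_0[OF Dvdiff])
  have deriv_transformed: "((\<lambda>a. frechet_derivative f (at x) v + integral {0..a} (\<lambda>s. DD w v (x + s *\<^sub>R w)))
      has_vector_derivative DD v w x) (at 0 within {0..1})"
    by (rule has_vector_derivative_transform[OF _ _ deriv_direct])
      (simp_all add: DD_def frechet_derivative_increment_integral[OF C2, symmetric])
  have "DD v w x = DD w v x"
    using vector_derivative_unique_within_closed_interval[of 0 1 0, unfolded cbox_interval, OF _ _ deriv_transformed deriv_integral]
    by simp
  then show ?thesis by (simp add: DD_def)
qed

section \<open>Signs of shuffles\<close>

lemma sum_Pow_Diff_singleton_reindex:
  fixes I :: "'n::finite set"
  shows "(\<Sum>i\<in>I. \<Sum>J\<in>Pow (I - {i}). g i J) = (\<Sum>M\<in>Pow I. \<Sum>i\<in>M. g i (M - {i}))"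
proof -
  have "(\<Sum>i\<in>I. \<Sum>J\<in>Pow (I - {i}). g i J) = (\<Sum>(i,J)\<in>Sigma I (\<lambda>i. Pow (I - {i})). g i J)"
    by (rule sum.Sigma) auto
  also have "\<dots> = (\<Sum>(M,i)\<in>Sigma (Pow I) (\<lambda>M. M). g i (M - {i}))"
    by (rule sum.reindex_bij_witness[where i="\<lambda>(M,i). (i, M - {i})" and j="\<lambda>(i,J). (insert i J, i)"])
      (auto simp: insert_absorb subset_Diff_insert)
  also have "\<dots> = (\<Sum>M\<in>Pow I. \<Sum>i\<in>M. g i (M - {i}))"
    by (rule sum.Sigma[symmetric]) auto
  finally show ?thesis .
qed

lemma sum_Pow_Diff_singleton_swap:
  fixes I :: "'n::finite set"
  shows "(\<Sum>i\<in>I. \<Sum>J\<in>Pow (I - {i}). g i J) = (\<Sum>J\<in>Pow I. \<Sum>i\<in>I - J. g i J)"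
proof -
  have "(\<Sum>i\<in>I. \<Sum>J\<in>Pow (I - {i}). g i J) = (\<Sum>(i,J)\<in>Sigma I (\<lambda>i. Pow (I - {i})). g i J)"
    by (rule sum.Sigma) auto
  also have "\<dots> = (\<Sum>(J,i)\<in>Sigma (Pow I) (\<lambda>J. I - J). g i J)"
    by (rule sum.reindex_bij_witness[where i="\<lambda>(J,i). (i, J)" and j="\<lambda>(i,J). (J, i)"]) auto
  also have "\<dots> = (\<Sum>J\<in>Pow I. \<Sum>i\<in>I - J. g i J)"
    by (rule sum.Sigma[symmetric]) auto
  finally show ?thesis .
qed

lemma sum_Pow_Pow_reindex:
  fixes I :: "'n::finite set"
  shows "(\<Sum>M\<in>Pow I. \<Sum>J\<in>Pow M. g M J) = (\<Sum>J\<in>Pow I. \<Sum>K\<in>Pow (I - J). g (J \<union> K) J)"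
proof -
  have "(\<Sum>M\<in>Pow I. \<Sum>J\<in>Pow M. g M J) = (\<Sum>(M,J)\<in>Sigma (Pow I) Pow. g M J)"
    by (rule sum.Sigma) auto
  also have "\<dots> = (\<Sum>(J,K)\<in>Sigma (Pow I) (\<lambda>J. Pow (I - J)). g (J \<union> K) J)"
    by (rule sum.reindex_bij_witness[where i="\<lambda>(J,K). (J \<union> K, J)" and j="\<lambda>(M,J). (J, M - J)"])
      (auto simp: Un_absorb1)
  also have "\<dots> = (\<Sum>J\<in>Pow I. \<Sum>K\<in>Pow (I - J). g (J \<union> K) J)"
    by (rule sum.Sigma[symmetric]) auto
  finally show ?thesis .
qed

lemma sum_Pow_Pow_Diff_swap:
  fixes I :: "'n::finite set"
  shows "(\<Sum>J\<in>Pow I. \<Sum>K\<in>Pow (I - J). g J K) = (\<Sum>J\<in>Pow I. \<Sum>K\<in>Pow (I - J). g K J)"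
proof -
  have "(\<Sum>J\<in>Pow I. \<Sum>K\<in>Pow (I - J). g J K) = (\<Sum>(J,K)\<in>Sigma (Pow I) (\<lambda>J. Pow (I - J)). g J K)"
    by (rule sum.Sigma) auto
  also have "\<dots> = (\<Sum>(J,K)\<in>Sigma (Pow I) (\<lambda>J. Pow (I - J)). g K J)"
    by (rule sum.reindex_bij_witness[where i="\<lambda>(J,K). (K, J)" and j="\<lambda>(J,K). (K, J)"]) auto
  also have "\<dots> = (\<Sum>J\<in>Pow I. \<Sum>K\<in>Pow (I - J). g K J)"
    by (rule sum.Sigma[symmetric]) auto
  finally show ?thesis .
qed

lemma sum_distinct_pairs_swap:
  fixes I :: "'n::finite set"
  shows "(\<Sum>i\<in>I. \<Sum>j\<in>I - {i}. g i j) = (\<Sum>i\<in>I. \<Sum>j\<in>I - {i}. g j i)"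
proof -
  have "(\<Sum>i\<in>I. \<Sum>j\<in>I - {i}. g i j) = (\<Sum>(i,j)\<in>Sigma I (\<lambda>i. I - {i}). g i j)"
    by (rule sum.Sigma) auto
  also have "\<dots> = (\<Sum>(i,j)\<in>Sigma I (\<lambda>i. I - {i}). g j i)"
    by (rule sum.reindex_bij_witness[where i="\<lambda>(i,j). (j, i)" and j="\<lambda>(i,j). (j, i)"]) auto
  also have "\<dots> = (\<Sum>i\<in>I. \<Sum>j\<in>I - {i}. g j i)"
    by (rule sum.Sigma[symmetric]) auto
  finally show ?thesis .
qed

definition inversions :: "'n::linorder set \<Rightarrow> 'n set \<Rightarrow> ('n \<times> 'n) set" where
  "inversions J K = {(a, b). a \<in> J \<and> b \<in> K \<and> b < a}"

lemma perm_sign_inversions: "perm_sign J K = (-1) ^ card (inversions J K)"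
  by (simp add: perm_sign_def inversions_def)

lemma card_inversions_Un_right:
  fixes J :: "'n::{finite,linorder} set"
  assumes "K1 \<inter> K2 = {}"
  shows "card (inversions J (K1 \<union> K2)) = card (inversions J K1) + card (inversions J K2)"
proof -
  have "inversions J (K1 \<union> K2) = inversions J K1 \<union> inversions J K2"
    by (auto simp: inversions_def)
  moreover have "card (inversions J K1 \<union> inversions J K2) = card (inversions J K1) + card (inversions J K2)"
    by (rule card_Un_disjoint) (use assms in \<open>auto simp: inversions_def\<close>)
  ultimately show ?thesis by simp
qed

lemma card_inversions_Un_left:
  fixes K :: "'n::{finite,linorder} set"
  assumes "J1 \<inter> J2 = {}"
  shows "card (inversions (J1 \<union> J2) K) = card (inversions J1 K) + card (inversions J2 K)"
proof -
  have "inversions (J1 \<union> J2) K = inversions J1 K \<union> inversions J2 K"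
    by (auto simp: inversions_def)
  moreover have "card (inversions J1 K \<union> inversions J2 K) = card (inversions J1 K) + card (inversions J2 K)"
    by (rule card_Un_disjoint) (use assms in \<open>auto simp: inversions_def\<close>)
  ultimately show ?thesis by simp
qed

lemma card_inversions_swap:
  fixes J :: "'n::{finite,linorder} set"
  assumes "J \<inter> K = {}"
  shows "card (inversions J K) + card (inversions K J) = card J * card K"
proof -
  let ?L = "{(a, b). a \<in> J \<and> b \<in> K \<and> a < b}"
  have "inversions K J = prod.swap ` ?L"
    by (auto simp: inversions_def image_def)
  then have swap: "card (inversions K J) = card ?L"
    by (simp add: card_image)
  have "J \<times> K = inversions J K \<union> ?L"
    using assms by (auto simp: inversions_def neq_iff)
  moreover have "card (inversions J K \<union> ?L) = card (inversions J K) + card ?L"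
    by (rule card_Un_disjoint) (auto simp: inversions_def)
  ultimately show ?thesis
    using swap card_cartesian_product[of J K] by simp
qed

lemma perm_sign_Un_right:
  fixes J :: "'n::{finite,linorder} set"
  shows "K1 \<inter> K2 = {} \<Longrightarrow> perm_sign J (K1 \<union> K2) = perm_sign J K1 * perm_sign J K2"
  by (simp add: perm_sign_inversions card_inversions_Un_right power_add)

lemma perm_sign_Un_left:
  fixes K :: "'n::{finite,linorder} set"
  shows "J1 \<inter> J2 = {} \<Longrightarrow> perm_sign (J1 \<union> J2) K = perm_sign J1 K * perm_sign J2 K"
  by (simp add: perm_sign_inversions card_inversions_Un_left power_add)

lemma perm_sign_square: "perm_sign J K * perm_sign J K = 1"
  by (simp add: perm_sign_inversions flip: power_add)

lemma perm_sign_swap: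
  fixes J :: "'n::{finite,linorder} set"
  assumes "J \<inter> K = {}"
  shows "perm_sign K J = (-1) ^ (card J * card K) * perm_sign J K"
proof -
  have "perm_sign J K * perm_sign K J = (-1) ^ (card J * card K)"
    using assms by (simp add: perm_sign_inversions card_inversions_swap flip: power_add)
  then have "perm_sign J K * (perm_sign J K * perm_sign K J) = perm_sign J K * (-1) ^ (card J * card K)"
    by simp
  then show ?thesis
    by (simp add: perm_sign_square mult.assoc[symmetric] mult.commute)
qed

lemma perm_sign_singletons:
  fixes i :: "'n::{finite,linorder}"
  shows "i \<noteq> j \<Longrightarrow> perm_sign {j} {i} = - perm_sign {i} {j}"
  using perm_sign_swap[of "{i}" "{j}"] by simp

lemma perm_sign_empty [simp]: "perm_sign {} K = 1" "perm_sign J {} = 1"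
  by (simp_all add: perm_sign_def)

text \<open>The sign in the definition of \<^const>\<open>dext\<close>: moving \<open>dx\<^sub>i\<close> to the front of \<open>dx\<^sub>I\<close>.\<close>
abbreviation ext_sign :: "'n::linorder \<Rightarrow> 'n set \<Rightarrow> real" where
  "ext_sign i I \<equiv> (-1::real) ^ card {j\<in>I. j < i}"

lemma ext_sign_eq_perm_sign: "ext_sign i I = perm_sign {i} (I - {i})"
proof -
  have "inversions {i} (I - {i}) = (\<lambda>b. (i, b)) ` {j\<in>I. j < i}"
    by (auto simp: inversions_def)
  then have "card (inversions {i} (I - {i})) = card {j\<in>I. j < i}"
    by (simp add: card_image inj_on_def)
  then show ?thesis by (simp add: perm_sign_inversions)
qed

lemma ext_sign_remove_two:
  fixes I :: "'n::{finite,linorder} set"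
  assumes "i \<in> I" "j \<in> I" "i \<noteq> j"
  shows "ext_sign i I * ext_sign j (I - {i}) = - (ext_sign j I * ext_sign i (I - {j}))"
proof -
  define L where "L = I - {i} - {j}"
  have L: "I - {i} = L \<union> {j}" "I - {j} = L \<union> {i}" "L - {i} = L" "L - {j} = L"
    using assms by (auto simp: L_def)
  have "perm_sign {i} (L \<union> {j}) = perm_sign {i} L * perm_sign {i} {j}"
    "perm_sign {j} (L \<union> {i}) = perm_sign {j} L * perm_sign {j} {i}"
    by (rule perm_sign_Un_right; auto simp: L_def)+
  then show ?thesis
    unfolding ext_sign_eq_perm_sign L using perm_sign_singletons[OF assms(3)]
    by (simp add: L algebra_simps)
qed

lemma ext_sign_split_member:
  fixes I :: "'n::{finite,linorder} set"
  assumes "i \<in> M" "M \<subseteq> I"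
  shows "ext_sign i I * perm_sign (M - {i}) (I - M) = perm_sign M (I - M) * ext_sign i M"
proof -
  have "perm_sign {i} ((M - {i}) \<union> (I - M)) = perm_sign {i} (M - {i}) * perm_sign {i} (I - M)"
    by (rule perm_sign_Un_right) auto
  moreover have "perm_sign ((M - {i}) \<union> {i}) (I - M) = perm_sign (M - {i}) (I - M) * perm_sign {i} (I - M)"
    by (rule perm_sign_Un_left) auto
  moreover have "(M - {i}) \<union> (I - M) = I - {i}" "(M - {i}) \<union> {i} = M"
    using assms by auto
  ultimately show ?thesis
    unfolding ext_sign_eq_perm_sign by (simp add: algebra_simps)
qed

lemma ext_sign_split_nonmember:
  fixes I :: "'n::{finite,linorder} set"
  assumes "i \<in> I" "J \<subseteq> I" "i \<notin> J"
  shows "ext_sign i I * perm_sign J (I - {i} - J) = (-1) ^ card J * (perm_sign J (I - J) * ext_sign i (I - J))"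
proof -
  define L where "L = I - {i} - J"
  have L: "I - {i} = J \<union> L" "I - J = L \<union> {i}" "J \<union> L - J = L" "L - {i} = L"
    using assms by (auto simp: L_def)
  have "perm_sign {i} (J \<union> L) = perm_sign {i} J * perm_sign {i} L"
    "perm_sign J (L \<union> {i}) = perm_sign J L * perm_sign J {i}"
    by (rule perm_sign_Un_right; auto simp: L_def)+
  moreover have "perm_sign {i} J = (-1) ^ card J * perm_sign J {i}"
    using perm_sign_swap[of J "{i}"] assms by simp
  ultimately show ?thesis
    unfolding ext_sign_eq_perm_sign L by (simp add: L algebra_simps)
qed

section \<open>The matrix Lie algebra\<close>

type_synonym 'm cmat = "complex^'m^'m"

lemma matrix_mult_add_left: "((a::'m::finite cmat) + b) ** c = a ** c + b ** c"
  by (simp add: matrix_matrix_mult_def vec_eq_iff sum.distrib algebra_simps)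

lemma matrix_mult_scaleR_left: "(r *\<^sub>R (a::'m::finite cmat)) ** c = r *\<^sub>R (a ** c)"
  by (simp add: matrix_matrix_mult_def vec_eq_iff scaleR_sum_right vector_scaleR_component)

lemma matrix_mult_scaleR_right: "(a::'m::finite cmat) ** (r *\<^sub>R c) = r *\<^sub>R (a ** c)"
  by (simp add: matrix_matrix_mult_def vec_eq_iff scaleR_sum_right vector_scaleR_component)

lemma bounded_bilinear_matrix_mult: "bounded_bilinear ((**) :: 'm::finite cmat \<Rightarrow> 'm cmat \<Rightarrow> 'm cmat)"
  unfolding bilinear_conv_bounded_bilinear[symmetric] bilinear_def
  by (auto intro!: linearI simp: matrix_mult_add_left matrix_add_ldistrib
      matrix_mult_scaleR_left matrix_mult_scaleR_right)

lemma bounded_bilinear_lbr_mat: "bounded_bilinear (lbr_mat :: 'm::finite cmat \<Rightarrow> 'm cmat \<Rightarrow> 'm cmat)"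
proof -
  interpret bounded_bilinear "(**) :: 'm cmat \<Rightarrow> 'm cmat \<Rightarrow> 'm cmat"
    by (rule bounded_bilinear_matrix_mult)
  show ?thesis
    unfolding bilinear_conv_bounded_bilinear[symmetric] bilinear_def lbr_mat_def
    by (auto intro!: linearI simp: add_left add_right scaleR_left scaleR_right algebra_simps)
qed

lemma lbr_mat_jacobi:
  "lbr_mat (a::'m::finite cmat) (lbr_mat b c) = lbr_mat (lbr_mat a b) c + lbr_mat b (lbr_mat a c)"
  unfolding lbr_mat_def
  by (simp add: bounded_bilinear.diff_left[OF bounded_bilinear_matrix_mult]
      bounded_bilinear.diff_right[OF bounded_bilinear_matrix_mult] matrix_mul_assoc)

lemma lbr_mat_antisym: "lbr_mat (a::'m::finite cmat) b = - lbr_mat b a"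
  unfolding lbr_mat_def by simp

lemma madj_mult: "madj ((a::'m::finite cmat) ** b) = madj b ** madj a"
  by (simp add: madj_def matrix_matrix_mult_def vec_eq_iff mult.commute)

lemma madj_madj [simp]: "madj (madj (a::'m::finite cmat)) = a"
  by (simp add: madj_def vec_eq_iff)

lemma bounded_linear_madj: "bounded_linear (madj :: 'm::finite cmat \<Rightarrow> 'm cmat)"
  unfolding linear_conv_bounded_linear[symmetric]
  by (rule linearI) (simp_all add: madj_def vec_eq_iff vector_scaleR_component complex_cnj_scaleR)

lemma mtrace_mult_commute: "mtrace ((a::'m::finite cmat) ** b) = mtrace (b ** a)"
  unfolding mtrace_def matrix_matrix_mult_def
  by (simp, subst sum.swap, simp add: mult.commute)

lemma ip_mat_eq_inner: "ip_mat (a::'m::finite cmat) b = inner a b"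
  unfolding ip_mat_def mtrace_def matrix_matrix_mult_def madj_def inner_vec_def inner_complex_def
  by (simp, subst sum.swap, simp)

lemma ip_mat_mult_left: "ip_mat (x::'m::finite cmat) (p ** y) = ip_mat (madj p ** x) y"
  unfolding ip_mat_def by (simp add: madj_mult matrix_mul_assoc)

lemma ip_mat_mult_right: "ip_mat (x::'m::finite cmat) (y ** p) = ip_mat (x ** madj p) y"
proof -
  have "mtrace (madj x ** (y ** p)) = mtrace ((madj x ** y) ** p)"
    by (simp only: matrix_mul_assoc)
  also have "\<dots> = mtrace (p ** (madj x ** y))"
    by (rule mtrace_mult_commute)
  also have "\<dots> = mtrace ((p ** madj x) ** y)"
    by (simp only: matrix_mul_assoc)
  also have "p ** madj x = madj (x ** madj p)"
    by (simp only: madj_mult madj_madj)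
  finally show ?thesis
    unfolding ip_mat_def by simp
qed

text \<open>For skew-Hermitian \<open>p\<close>, both \<open>a \<mapsto> p a\<close> and \<open>a \<mapsto> a p\<close> are skew-adjoint.\<close>
lemma ip_mat_lbr_mat_skew:
  assumes "madj p = - (p::'m::finite cmat)"
  shows "ip_mat a (lbr_mat p a) = 0"
proof -
  interpret mm: bounded_bilinear "(**) :: 'm cmat \<Rightarrow> 'm cmat \<Rightarrow> 'm cmat"
    by (rule bounded_bilinear_matrix_mult)
  have "ip_mat a (p ** a) = - ip_mat a (p ** a)"
    using ip_mat_mult_left[of a p a] by (simp add: assms mm.minus_left ip_mat_eq_inner inner_commute)
  moreover have "ip_mat a (a ** p) = - ip_mat a (a ** p)"
    using ip_mat_mult_right[of a a p] by (simp add: assms mm.minus_right ip_mat_eq_inner inner_commute)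
  ultimately show ?thesis
    by (simp add: lbr_mat_def ip_mat_eq_inner inner_diff_right)
qed

text \<open>Differentiating \<open>\<gamma>(s)\<^sup>* \<gamma>(s) = 1\<close> at \<open>s = 0\<close>.\<close>
lemma lie_algebra_skew:
  assumes G: "compact_unitary_group G" and v: "v \<in> lie_algebra G"
  shows "madj v = - (v::'m::finite cmat)"
proof -
  obtain \<gamma> where g0: "\<gamma> 0 = mat 1" and gG: "\<And>s. \<gamma> s \<in> G"
    and gd: "(\<gamma> has_vector_derivative v) (at 0)"
    using v unfolding lie_algebra_def by blast
  have un: "madj (\<gamma> s) ** \<gamma> s = mat 1" for s
    using G gG[of s] unfolding compact_unitary_group_def unitary_mat_def by blast
  have "((\<lambda>s. madj (\<gamma> s) ** \<gamma> s) has_vector_derivative (madj (\<gamma> 0) ** v + madj v ** \<gamma> 0)) (at 0)"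
    by (rule bounded_bilinear.has_vector_derivative[OF bounded_bilinear_matrix_mult
          bounded_linear.has_vector_derivative[OF bounded_linear_madj gd] gd])
  moreover have "((\<lambda>s. madj (\<gamma> s) ** \<gamma> s) has_vector_derivative 0) (at 0)"
    unfolding un by (rule has_vector_derivative_const)
  ultimately have "madj (\<gamma> 0) ** v + madj v ** \<gamma> 0 = 0"
    by (rule vector_derivative_unique_at)
  moreover have "madj (mat 1 :: 'm cmat) = mat 1"
    by (simp add: madj_def vec_eq_iff mat_def)
  ultimately have "v + madj v = 0" by (simp add: g0)
  then show ?thesis by (simp add: eq_neg_iff_add_eq_0 add.commute)
qed

section \<open>Wedge products of coefficient families\<close>

lemma eq_neg_imp_zero:
  fixes x :: "'a::real_vector"
  assumes "x = - x"
  shows "x = 0"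
proof -
  have "2 *\<^sub>R x = 0"
    using assms by (metis add.right_inverse scaleR_2)
  then show ?thesis by simp
qed

lemma wedge_with_add_left:
  "bounded_bilinear f \<Longrightarrow> wedge_with f (\<lambda>J. u J + u' J) v I = wedge_with f u v I + wedge_with f u' v I"
  by (simp add: wedge_with_def bounded_bilinear.add_left scaleR_add_right sum.distrib)

lemma wedge_with_add_right:
  "bounded_bilinear f \<Longrightarrow> wedge_with f u (\<lambda>J. v J + v' J) I = wedge_with f u v I + wedge_with f u v' I"
  by (simp add: wedge_with_def bounded_bilinear.add_right scaleR_add_right sum.distrib)

lemma wedge_with_scaleR_left:
  "bounded_bilinear f \<Longrightarrow> wedge_with f (\<lambda>J. c *\<^sub>R u J) v I = c *\<^sub>R wedge_with f u v I"
  by (simp add: wedge_with_def bounded_bilinear.scaleR_left scaleR_sum_right mult.commute)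

lemma wedge_with_neg_left:
  "bounded_bilinear f \<Longrightarrow> wedge_with f (\<lambda>J. - u J) v I = - wedge_with f u v I"
  by (simp add: wedge_with_def bounded_bilinear.minus_left sum_negf)

lemma wedge_with_degree0_left:
  fixes I :: "'n::{finite,linorder} set"
  assumes f: "bounded_bilinear f" and u: "homog (\<lambda>j. j = 0) u"
  shows "wedge_with f u v I = f (u {}) (v I)"
proof -
  have "wedge_with f u v I = perm_sign {} (I - {}) *\<^sub>R f (u {}) (v (I - {})) +
      (\<Sum>J\<in>Pow I - {{}}. perm_sign J (I - J) *\<^sub>R f (u J) (v (I - J)))"
    unfolding wedge_with_def by (rule sum.remove) auto
  also have "(\<Sum>J\<in>Pow I - {{}}. perm_sign J (I - J) *\<^sub>R f (u J) (v (I - J))) = 0"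
    using u by (intro sum.neutral) (auto simp: homog_def bounded_bilinear.zero_left[OF f])
  finally show ?thesis by simp
qed

lemma wedge_with_degree0_right:
  fixes I :: "'n::{finite,linorder} set"
  assumes f: "bounded_bilinear f" and v: "homog (\<lambda>j. j = 0) v"
  shows "wedge_with f u v I = f (u I) (v {})"
proof -
  have "wedge_with f u v I = perm_sign I (I - I) *\<^sub>R f (u I) (v (I - I)) +
      (\<Sum>J\<in>Pow I - {I}. perm_sign J (I - J) *\<^sub>R f (u J) (v (I - J)))"
    unfolding wedge_with_def by (rule sum.remove) auto
  also have "(\<Sum>J\<in>Pow I - {I}. perm_sign J (I - J) *\<^sub>R f (u J) (v (I - J))) = 0"
  proof (intro sum.neutral ballI)
    fix J assume "J \<in> Pow I - {I}"
    then have "card (I - J) \<noteq> 0" by auto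
    then show "perm_sign J (I - J) *\<^sub>R f (u J) (v (I - J)) = 0"
      using v by (simp add: homog_def bounded_bilinear.zero_right[OF f])
  qed
  finally show ?thesis by simp
qed

text \<open>The combinatorial core of the Leibniz rule \<open>d(u \<and> v) = du \<and> v + (-1)\<^sup>k u \<and> dv\<close>.\<close>
lemma wedge_with_ext_sum_left:
  fixes I :: "'n::{finite,linorder} set"
  assumes f: "bounded_bilinear f"
  shows "(\<Sum>i\<in>I. ext_sign i I *\<^sub>R wedge_with f (U i) v (I - {i})) =
         wedge_with f (\<lambda>J. \<Sum>i\<in>J. ext_sign i J *\<^sub>R U i (J - {i})) v I"
proof -
  have "(\<Sum>i\<in>I. ext_sign i I *\<^sub>R wedge_with f (U i) v (I - {i})) =
      (\<Sum>i\<in>I. \<Sum>J\<in>Pow (I - {i}). (ext_sign i I * perm_sign J (I - {i} - J)) *\<^sub>R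
        f (U i J) (v (I - {i} - J)))"
    by (simp add: wedge_with_def scaleR_sum_right)
  also have "\<dots> = (\<Sum>M\<in>Pow I. \<Sum>i\<in>M. (ext_sign i I * perm_sign (M - {i}) (I - {i} - (M - {i}))) *\<^sub>R
      f (U i (M - {i})) (v (I - {i} - (M - {i}))))"
    by (rule sum_Pow_Diff_singleton_reindex)
  also have "\<dots> = (\<Sum>M\<in>Pow I. \<Sum>i\<in>M. (perm_sign M (I - M) * ext_sign i M) *\<^sub>R
      f (U i (M - {i})) (v (I - M)))"
  proof (intro sum.cong refl)
    fix M i assume M: "M \<in> Pow I" and i: "i \<in> M"
    then have "I - {i} - (M - {i}) = I - M" by auto
    then show "(ext_sign i I * perm_sign (M - {i}) (I - {i} - (M - {i}))) *\<^sub>R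
        f (U i (M - {i})) (v (I - {i} - (M - {i}))) =
       (perm_sign M (I - M) * ext_sign i M) *\<^sub>R f (U i (M - {i})) (v (I - M))"
      using ext_sign_split_member[of i M I] M i by simp
  qed
  also have "\<dots> = wedge_with f (\<lambda>J. \<Sum>i\<in>J. ext_sign i J *\<^sub>R U i (J - {i})) v I"
    by (simp add: wedge_with_def bounded_bilinear.sum_left[OF f]
        bounded_bilinear.scaleR_left[OF f] scaleR_sum_right)
  finally show ?thesis .
qed

lemma wedge_with_ext_sum_right:
  fixes I :: "'n::{finite,linorder} set"
  assumes f: "bounded_bilinear f" and u: "homog (\<lambda>j. j = k) u"
  shows "(\<Sum>i\<in>I. ext_sign i I *\<^sub>R wedge_with f u (V i) (I - {i})) =
         (-1::real) ^ k *\<^sub>R wedge_with f u (\<lambda>K. \<Sum>i\<in>K. ext_sign i K *\<^sub>R V i (K - {i})) I"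
proof -
  have "(\<Sum>i\<in>I. ext_sign i I *\<^sub>R wedge_with f u (V i) (I - {i})) =
      (\<Sum>i\<in>I. \<Sum>J\<in>Pow (I - {i}). (ext_sign i I * perm_sign J (I - {i} - J)) *\<^sub>R
        f (u J) (V i (I - {i} - J)))"
    by (simp add: wedge_with_def scaleR_sum_right)
  also have "\<dots> = (\<Sum>J\<in>Pow I. \<Sum>i\<in>I - J. (ext_sign i I * perm_sign J (I - {i} - J)) *\<^sub>R
      f (u J) (V i (I - {i} - J)))"
    by (rule sum_Pow_Diff_singleton_swap)
  also have "\<dots> = (\<Sum>J\<in>Pow I. \<Sum>i\<in>I - J. ((-1) ^ k * (perm_sign J (I - J) * ext_sign i (I - J))) *\<^sub>R
      f (u J) (V i (I - J - {i})))"
  proof (intro sum.cong refl)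
    fix J i assume J: "J \<in> Pow I" and i: "i \<in> I - J"
    then have e: "I - {i} - J = I - J - {i}" by auto
    show "(ext_sign i I * perm_sign J (I - {i} - J)) *\<^sub>R f (u J) (V i (I - {i} - J)) =
       ((-1) ^ k * (perm_sign J (I - J) * ext_sign i (I - J))) *\<^sub>R f (u J) (V i (I - J - {i}))"
    proof (cases "card J = k")
      case True
      then show ?thesis
        using ext_sign_split_nonmember[of i I J] J i by (simp add: e)
    next
      case False
      then show ?thesis
        using u by (simp add: homog_def bounded_bilinear.zero_left[OF f])
    qed
  qed
  also have "\<dots> = (-1::real) ^ k *\<^sub>R wedge_with f u (\<lambda>K. \<Sum>i\<in>K. ext_sign i K *\<^sub>R V i (K - {i})) I"
    by (simp add: wedge_with_def bounded_bilinear.sum_right[OF f]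
        bounded_bilinear.scaleR_right[OF f] scaleR_sum_right mult.assoc)
  finally show ?thesis .
qed

text \<open>The combinatorial core of \<open>d \<circ> d = 0\<close>.\<close>
lemma ext_sign_double_sum_symmetric_eq_0:
  fixes I :: "'n::{finite,linorder} set" and W :: "'n \<Rightarrow> 'n \<Rightarrow> 'n set \<Rightarrow> 'a::real_vector"
  assumes sym: "\<And>i j. W i j = W j i"
  shows "(\<Sum>i\<in>I. ext_sign i I *\<^sub>R (\<Sum>j\<in>I - {i}. ext_sign j (I - {i}) *\<^sub>R W i j (I - {i} - {j}))) = 0"
proof -
  define g where "g i j = (ext_sign i I * ext_sign j (I - {i})) *\<^sub>R W i j (I - {i} - {j})" for i j
  have "(\<Sum>i\<in>I. \<Sum>j\<in>I - {i}. g i j) = (\<Sum>i\<in>I. \<Sum>j\<in>I - {i}. g j i)"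
    by (rule sum_distinct_pairs_swap)
  also have "\<dots> = (\<Sum>i\<in>I. \<Sum>j\<in>I - {i}. - g i j)"
  proof (intro sum.cong refl)
    fix i j assume "i \<in> I" "j \<in> I - {i}"
    then have e: "I - {j} - {i} = I - {i} - {j}" by auto
    have s: "ext_sign i I * ext_sign j (I - {i}) = - (ext_sign j I * ext_sign i (I - {j}))"
      by (rule ext_sign_remove_two) (use \<open>i \<in> I\<close> \<open>j \<in> I - {i}\<close> in auto)
    show "g j i = - g i j"
      unfolding g_def e s sym[of i j] by simp
  qed
  also have "\<dots> = - (\<Sum>i\<in>I. \<Sum>j\<in>I - {i}. g i j)"
    by (simp add: sum_negf)
  finally show ?thesis
    by (auto dest: eq_neg_imp_zero simp: g_def scaleR_sum_right)
qed

text \<open>The sign of the shuffle of \<open>I\<close> into the blocks \<open>J\<close>, \<open>K\<close>, \<open>I - J - K\<close>.\<close>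
definition shuffle_sign3 :: "'n::linorder set \<Rightarrow> 'n set \<Rightarrow> 'n set \<Rightarrow> real" where
  "shuffle_sign3 I J K = perm_sign J K * perm_sign J (I - J - K) * perm_sign K (I - J - K)"

lemma wedge_with_wedge_right_expand:
  fixes I :: "'n::{finite,linorder} set"
  assumes f: "bounded_bilinear f" and g: "bounded_bilinear g"
  shows "wedge_with f u (\<lambda>K. wedge_with g v w K) I =
    (\<Sum>J\<in>Pow I. \<Sum>K\<in>Pow (I - J). shuffle_sign3 I J K *\<^sub>R f (u J) (g (v K) (w (I - J - K))))"
proof -
  have "wedge_with f u (\<lambda>K. wedge_with g v w K) I =
    (\<Sum>J\<in>Pow I. \<Sum>K\<in>Pow (I - J). (perm_sign J (I - J) * perm_sign K (I - J - K)) *\<^sub>R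
        f (u J) (g (v K) (w (I - J - K))))"
    by (simp add: wedge_with_def bounded_bilinear.sum_right[OF f]
        bounded_bilinear.scaleR_right[OF f] scaleR_sum_right)
  also have "\<dots> = (\<Sum>J\<in>Pow I. \<Sum>K\<in>Pow (I - J).
      (perm_sign J K * perm_sign J (I - J - K) * perm_sign K (I - J - K)) *\<^sub>R f (u J) (g (v K) (w (I - J - K))))"
  proof (intro sum.cong refl)
    fix J K assume "J \<in> Pow I" "K \<in> Pow (I - J)"
    then have "I - J = K \<union> (I - J - K)" by auto
    then have "perm_sign J (I - J) = perm_sign J K * perm_sign J (I - J - K)"
      by (metis perm_sign_Un_right Diff_disjoint)
    then show "(perm_sign J (I - J) * perm_sign K (I - J - K)) *\<^sub>R f (u J) (g (v K) (w (I - J - K))) =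
      (perm_sign J K * perm_sign J (I - J - K) * perm_sign K (I - J - K)) *\<^sub>R f (u J) (g (v K) (w (I - J - K)))"
      by simp
  qed
  finally show ?thesis
    unfolding shuffle_sign3_def .
qed

lemma wedge_with_wedge_left_expand:
  fixes I :: "'n::{finite,linorder} set"
  assumes h: "bounded_bilinear h" and k: "bounded_bilinear k"
  shows "wedge_with h (\<lambda>M. wedge_with k u v M) w I =
    (\<Sum>J\<in>Pow I. \<Sum>K\<in>Pow (I - J). shuffle_sign3 I J K *\<^sub>R h (k (u J) (v K)) (w (I - J - K)))"
proof -
  have "wedge_with h (\<lambda>M. wedge_with k u v M) w I =
     (\<Sum>M\<in>Pow I. \<Sum>J\<in>Pow M. (perm_sign M (I - M) * perm_sign J (M - J)) *\<^sub>R
       h (k (u J) (v (M - J))) (w (I - M)))"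
    by (simp add: wedge_with_def bounded_bilinear.sum_left[OF h]
        bounded_bilinear.scaleR_left[OF h] scaleR_sum_right)
  also have "\<dots> = (\<Sum>J\<in>Pow I. \<Sum>K\<in>Pow (I - J). (perm_sign (J \<union> K) (I - (J \<union> K)) * perm_sign J ((J \<union> K) - J)) *\<^sub>R
       h (k (u J) (v ((J \<union> K) - J))) (w (I - (J \<union> K))))"
    by (rule sum_Pow_Pow_reindex)
  also have "\<dots> = (\<Sum>J\<in>Pow I. \<Sum>K\<in>Pow (I - J). (perm_sign J K * perm_sign J (I - J - K) * perm_sign K (I - J - K)) *\<^sub>R
        h (k (u J) (v K)) (w (I - J - K)))"
  proof (intro sum.cong refl)
    fix J K assume "J \<in> Pow I" "K \<in> Pow (I - J)"
    moreover have "perm_sign (J \<union> K) (I - J - K) = perm_sign J (I - J - K) * perm_sign K (I - J - K)"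
      by (rule perm_sign_Un_left) (use \<open>K \<in> Pow (I - J)\<close> in auto)
    moreover have "(J \<union> K) - J = K" "I - (J \<union> K) = I - J - K"
      using \<open>K \<in> Pow (I - J)\<close> by auto
    ultimately show "(perm_sign (J \<union> K) (I - (J \<union> K)) * perm_sign J ((J \<union> K) - J)) *\<^sub>R
       h (k (u J) (v ((J \<union> K) - J))) (w (I - (J \<union> K))) =
      (perm_sign J K * perm_sign J (I - J - K) * perm_sign K (I - J - K)) *\<^sub>R h (k (u J) (v K)) (w (I - J - K))"
      by (simp add: algebra_simps)
  qed
  finally show ?thesis
    unfolding shuffle_sign3_def .
qed

lemma shuffle_sign3_swap:
  fixes I :: "'n::{finite,linorder} set"
  assumes "J \<inter> K = {}"
  shows "shuffle_sign3 I K J = (-1) ^ (card J * card K) * shuffle_sign3 I J K"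
proof -
  have "I - K - J = I - J - K" by auto
  then show ?thesis
    using perm_sign_swap[OF assms] by (simp add: shuffle_sign3_def algebra_simps)
qed

lemma sum_shuffle_sign3_lbr_one_forms_swap:
  fixes I :: "'n::{finite,linorder} set" and a h :: "'n set \<Rightarrow> 'm::finite cmat"
  assumes a: "homog (\<lambda>j. j = 1) a"
  shows "(\<Sum>J\<in>Pow I. \<Sum>K\<in>Pow (I - J). shuffle_sign3 I J K *\<^sub>R lbr_mat (a K) (lbr_mat (a J) (h (I - J - K)))) =
    - (\<Sum>J\<in>Pow I. \<Sum>K\<in>Pow (I - J). shuffle_sign3 I J K *\<^sub>R lbr_mat (a J) (lbr_mat (a K) (h (I - J - K))))"
proof -
  interpret lbr: bounded_bilinear "lbr_mat :: 'm cmat \<Rightarrow> 'm cmat \<Rightarrow> 'm cmat"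
    by (rule bounded_bilinear_lbr_mat)
  have "(\<Sum>J\<in>Pow I. \<Sum>K\<in>Pow (I - J). shuffle_sign3 I J K *\<^sub>R lbr_mat (a K) (lbr_mat (a J) (h (I - J - K)))) =
      (\<Sum>J\<in>Pow I. \<Sum>K\<in>Pow (I - J). shuffle_sign3 I K J *\<^sub>R lbr_mat (a J) (lbr_mat (a K) (h (I - K - J))))"
    by (rule sum_Pow_Pow_Diff_swap)
  also have "\<dots> = (\<Sum>J\<in>Pow I. \<Sum>K\<in>Pow (I - J). - (shuffle_sign3 I J K *\<^sub>R lbr_mat (a J) (lbr_mat (a K) (h (I - J - K)))))"
  proof (intro sum.cong refl)
    fix J K assume "J \<in> Pow I" "K \<in> Pow (I - J)"
    then have e: "I - K - J = I - J - K" and JK: "J \<inter> K = {}" by auto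
    show "shuffle_sign3 I K J *\<^sub>R lbr_mat (a J) (lbr_mat (a K) (h (I - K - J))) =
        - (shuffle_sign3 I J K *\<^sub>R lbr_mat (a J) (lbr_mat (a K) (h (I - J - K))))"
    proof (cases "card J = 1 \<and> card K = 1")
      case True
      then show ?thesis by (simp add: shuffle_sign3_swap[OF JK] e)
    next
      case False
      then have "a J = 0 \<or> a K = 0"
        using a by (auto simp: homog_def)
      then show ?thesis
        by (auto simp: lbr.zero_left lbr.zero_right)
    qed
  qed
  finally show ?thesis
    by (simp add: sum_negf)
qed

text \<open>The Jacobi identity splits \<open>[a \<and> [a \<and> h]]\<close> as \<open>[[a \<and> a] \<and> h] + Y\<close>, and exchanging the two
  copies of \<open>a\<close> in \<open>Y\<close> shows \<open>Y = - [a \<and> [a \<and> h]]\<close>.\<close>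
lemma wedge_lbr_one_form_twice:
  fixes I :: "'n::{finite,linorder} set" and a h :: "'n set \<Rightarrow> 'm::finite cmat"
  assumes a: "homog (\<lambda>j. j = 1) a"
  shows "2 *\<^sub>R wedge_with lbr_mat a (\<lambda>K. wedge_with lbr_mat a h K) I =
         wedge_with lbr_mat (\<lambda>M. wedge_with lbr_mat a a M) h I"
proof -
  interpret lbr: bounded_bilinear "lbr_mat :: 'm cmat \<Rightarrow> 'm cmat \<Rightarrow> 'm cmat"
    by (rule bounded_bilinear_lbr_mat)
  define X where "X = (\<Sum>J\<in>Pow I. \<Sum>K\<in>Pow (I - J). shuffle_sign3 I J K *\<^sub>R lbr_mat (a J) (lbr_mat (a K) (h (I - J - K))))"
  have "wedge_with lbr_mat (\<lambda>M. wedge_with lbr_mat a a M) h I =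
      (\<Sum>J\<in>Pow I. \<Sum>K\<in>Pow (I - J). shuffle_sign3 I J K *\<^sub>R lbr_mat (lbr_mat (a J) (a K)) (h (I - J - K)))"
    by (rule wedge_with_wedge_left_expand[OF lbr.bounded_bilinear_axioms lbr.bounded_bilinear_axioms])
  also have "\<dots> = X - (\<Sum>J\<in>Pow I. \<Sum>K\<in>Pow (I - J).
      shuffle_sign3 I J K *\<^sub>R lbr_mat (a K) (lbr_mat (a J) (h (I - J - K))))"
    unfolding X_def sum_subtractf[symmetric]
  proof (intro sum.cong refl)
    fix J K
    show "shuffle_sign3 I J K *\<^sub>R lbr_mat (lbr_mat (a J) (a K)) (h (I - J - K)) =
      shuffle_sign3 I J K *\<^sub>R lbr_mat (a J) (lbr_mat (a K) (h (I - J - K))) -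
      shuffle_sign3 I J K *\<^sub>R lbr_mat (a K) (lbr_mat (a J) (h (I - J - K)))"
      by (simp only: lbr_mat_jacobi[of "a J" "a K" "h (I - J - K)"]) (simp add: algebra_simps)
  qed
  also have "\<dots> = 2 *\<^sub>R X"
    unfolding sum_shuffle_sign3_lbr_one_forms_swap[OF a] X_def by (simp add: scaleR_2)
  finally show ?thesis
    unfolding X_def
    by (simp add: wedge_with_wedge_right_expand[OF lbr.bounded_bilinear_axioms lbr.bounded_bilinear_axioms])
qed

lemma wedge_lbr_zero_form_jacobi:
  fixes I :: "'n::{finite,linorder} set" and p a d :: "'n set \<Rightarrow> 'm::finite cmat"
  assumes p: "homog (\<lambda>j. j = 0) p"
  shows "wedge_with lbr_mat a (\<lambda>K. wedge_with lbr_mat p d K) I =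
    wedge_with lbr_mat (\<lambda>K. wedge_with lbr_mat a p K) d I +
    wedge_with lbr_mat p (\<lambda>K. wedge_with lbr_mat a d K) I"
proof -
  interpret lbr: bounded_bilinear "lbr_mat :: 'm cmat \<Rightarrow> 'm cmat \<Rightarrow> 'm cmat"
    by (rule bounded_bilinear_lbr_mat)
  show ?thesis
    unfolding wedge_with_degree0_left[OF lbr.bounded_bilinear_axioms p]
      wedge_with_degree0_right[OF lbr.bounded_bilinear_axioms p]
    by (simp add: wedge_with_def lbr_mat_jacobi[of "a _" "p {}"] lbr.sum_right lbr.scaleR_right
        scaleR_add_right sum.distrib)
qed

lemma wedge_lbr_mat_basis_expansion:
  fixes I :: "'n::{finite,linorder} set" and X Y :: "'n set \<Rightarrow> 'm::finite cmat"
  shows "wedge_with lbr_mat X Y I =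
    (\<Sum>a\<in>Basis. \<Sum>b\<in>Basis. wedge_with (*) (\<lambda>J. X J \<bullet> a) (\<lambda>K. Y K \<bullet> b) I *\<^sub>R lbr_mat a b)"
proof -
  interpret lbr: bounded_bilinear "lbr_mat :: 'm cmat \<Rightarrow> 'm cmat \<Rightarrow> 'm cmat"
    by (rule bounded_bilinear_lbr_mat)
  have "lbr_mat (X J) (Y K) = (\<Sum>a\<in>Basis. \<Sum>b\<in>Basis. ((X J \<bullet> a) * (Y K \<bullet> b)) *\<^sub>R lbr_mat a b)" for J K
  proof -
    have "lbr_mat (X J) (Y K) = lbr_mat (\<Sum>a\<in>Basis. (X J \<bullet> a) *\<^sub>R a) (\<Sum>b\<in>Basis. (Y K \<bullet> b) *\<^sub>R b)"
      by (simp only: euclidean_representation)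
    then show ?thesis
      by (simp add: lbr.sum_left lbr.sum_right lbr.scaleR_left lbr.scaleR_right scaleR_sum_right)
        (subst sum.swap, simp add: mult.commute)
  qed
  then have "wedge_with lbr_mat X Y I = (\<Sum>J\<in>Pow I. \<Sum>a\<in>Basis. \<Sum>b\<in>Basis.
      (perm_sign J (I - J) * ((X J \<bullet> a) * (Y (I - J) \<bullet> b))) *\<^sub>R lbr_mat a b)"
    by (simp add: wedge_with_def scaleR_sum_right)
  also have "\<dots> = (\<Sum>a\<in>Basis. \<Sum>b\<in>Basis. \<Sum>J\<in>Pow I.
      (perm_sign J (I - J) * ((X J \<bullet> a) * (Y (I - J) \<bullet> b))) *\<^sub>R lbr_mat a b)"
    by (subst sum.swap, rule sum.cong[OF refl], rule sum.swap)
  finally show ?thesis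
    by (simp add: wedge_with_def scaleR_sum_left)
qed

lemma wedge_lbr_symmetric_op_self:
  fixes u :: "'n::{finite,linorder} set \<Rightarrow> 'm::finite cmat"
  assumes sym: "\<And>\<alpha> \<beta>. homog (\<lambda>j. j = k) \<alpha> \<Longrightarrow> homog (\<lambda>j. j = k) \<beta> \<Longrightarrow>
       wedge_with (*) \<alpha> (op_pt c x \<beta>) = wedge_with (*) \<beta> (op_pt c x \<alpha>)"
    and u: "homog (\<lambda>j. j = k) u"
  shows "wedge_with lbr_mat u (\<lambda>K. \<Sum>I'\<in>UNIV. c x K I' *\<^sub>R u I') I = 0"
proof -
  define C where "C a b = wedge_with (*) (\<lambda>J. u J \<bullet> a) (op_pt c x (\<lambda>J. u J \<bullet> b)) I" for a b
  have "(\<Sum>I'\<in>UNIV. c x K I' *\<^sub>R u I') \<bullet> b = op_pt c x (\<lambda>J. u J \<bullet> b) K" for K b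
    by (simp add: op_pt_def inner_sum_left)
  then have S: "wedge_with lbr_mat u (\<lambda>K. \<Sum>I'\<in>UNIV. c x K I' *\<^sub>R u I') I =
      (\<Sum>a\<in>Basis. \<Sum>b\<in>Basis. C a b *\<^sub>R lbr_mat a b)"
    by (simp add: wedge_lbr_mat_basis_expansion C_def)
  have h: "homog (\<lambda>j. j = k) (\<lambda>J. u J \<bullet> a)" for a
    using u by (simp add: homog_def)
  have C: "C a b = C b a" for a b
    unfolding C_def using sym[OF h[of a] h[of b]] by (rule fun_cong)
  have "(\<Sum>a\<in>Basis. \<Sum>b\<in>Basis. C a b *\<^sub>R lbr_mat a b) = (\<Sum>a\<in>Basis. \<Sum>b\<in>Basis. C b a *\<^sub>R lbr_mat b a)"
    by (rule sum.swap)
  also have "\<dots> = - (\<Sum>a\<in>Basis. \<Sum>b\<in>Basis. C a b *\<^sub>R lbr_mat a b)"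
    unfolding sum_negf[symmetric]
  proof (intro sum.cong refl)
    fix a b
    show "C b a *\<^sub>R lbr_mat b a = - (C a b *\<^sub>R lbr_mat a b)"
      by (simp only: C[of b a] lbr_mat_antisym[of b a] scaleR_minus_right)
  qed
  finally show ?thesis
    unfolding S by (rule eq_neg_imp_zero)
qed

section \<open>Calculus of smooth time-dependent fields\<close>

text \<open>A coefficient of a field as one map on space-time \<open>\<real>\<^sup>n \<times> \<real>\<close>, and its directional
  derivatives there; the direction \<open>(axis i 1, 0)\<close> gives \<open>\<partial>\<^sub>i\<close> and \<open>(0, 1)\<close> gives \<open>\<partial>\<^sub>t\<close>.\<close>
definition spacetime_coeff :: "('n::finite, 'm::finite) field \<Rightarrow> 'n set \<Rightarrow> (real, 'n) vec \<times> real \<Rightarrow> 'm cmat"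
  where "spacetime_coeff u I p = u I (fst p) (snd p)"

definition fderiv_field :: "(real, 'n) vec \<times> real \<Rightarrow> ('n::finite, 'm::finite) field \<Rightarrow> ('n, 'm) field"
  where "fderiv_field v u = (\<lambda>I x t. frechet_derivative (spacetime_coeff u I) (at (x, t)) v)"

definition homog_field :: "nat \<Rightarrow> ('n::finite, 'm::finite) field \<Rightarrow> bool"
  where "homog_field k u \<longleftrightarrow> (\<forall>x t. homog (\<lambda>j. j = k) (\<lambda>K. u K x t))"

lemma smooth_field_iff_Ck: "smooth_field u \<longleftrightarrow> (\<forall>I k. Ck k (spacetime_coeff u I))"
proof -
  have "(\<lambda>(x, t). u I x t) = spacetime_coeff u I" for I
    by (auto simp: spacetime_coeff_def fun_eq_iff)
  then show ?thesis by (simp add: smooth_field_def smooth_fun_def)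
qed

lemma smooth_field_Ck: "smooth_field u \<Longrightarrow> Ck k (spacetime_coeff u I)"
  by (simp add: smooth_field_iff_Ck)

lemma smooth_field_differentiable: "smooth_field u \<Longrightarrow> spacetime_coeff u I differentiable at p"
  using smooth_field_Ck[of u "Suc 0" I] by (cases p) (simp add: differentiable_on_def)

lemma smooth_field_has_derivative:
  "smooth_field u \<Longrightarrow> (spacetime_coeff u I has_derivative frechet_derivative (spacetime_coeff u I) (at p)) (at p)"
  using smooth_field_differentiable frechet_derivative_works by blast

lemma fderiv_field_eqI:
  "(spacetime_coeff u I has_derivative F) (at (x, t)) \<Longrightarrow> fderiv_field v u I x t = F v"
  unfolding fderiv_field_def using frechet_derivative_at by metis

lemma spacetime_coeff_fderiv_field:
  "spacetime_coeff (fderiv_field v u) I = (\<lambda>p. frechet_derivative (spacetime_coeff u I) (at p) v)"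
  by (simp add: spacetime_coeff_def fderiv_field_def fun_eq_iff)

lemma smooth_field_fderiv_field:
  assumes "smooth_field u"
  shows "smooth_field (fderiv_field v u)"
  unfolding smooth_field_iff_Ck spacetime_coeff_fderiv_field
proof (intro allI)
  fix I k
  from smooth_field_Ck[OF assms, of "Suc k" I]
  show "Ck k (\<lambda>p. frechet_derivative (spacetime_coeff u I) (at p) v)" by (cases v) simp
qed

lemma fderiv_field_commute:
  assumes "smooth_field u"
  shows "fderiv_field v (fderiv_field w u) = fderiv_field w (fderiv_field v u)"
proof (intro ext)
  fix I x t
  have "fderiv_field v (fderiv_field w u) I x t =
      frechet_derivative (\<lambda>p. frechet_derivative (spacetime_coeff u I) (at p) w) (at (x, t)) v"
    by (simp only: fderiv_field_def[of v] spacetime_coeff_fderiv_field)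
  also have "\<dots> = frechet_derivative (\<lambda>p. frechet_derivative (spacetime_coeff u I) (at p) v) (at (x, t)) w"
    by (rule frechet_derivative_commute[OF smooth_field_Ck[OF assms]])
  also have "\<dots> = fderiv_field w (fderiv_field v u) I x t"
    by (simp only: fderiv_field_def[of w] spacetime_coeff_fderiv_field)
  finally show "fderiv_field v (fderiv_field w u) I x t = fderiv_field w (fderiv_field v u) I x t" .
qed

lemma has_vector_derivative_tderiv:
  assumes "smooth_field u"
  shows "((\<lambda>s. u I x s) has_vector_derivative fderiv_field (0, 1) u I x t) (at t)"
proof -
  have "spacetime_coeff u I differentiable at ((x, 0) + t *\<^sub>R (0, 1))"
    by (rule smooth_field_differentiable[OF assms])
  from has_vector_derivative_along_line[OF this, of UNIV] show ?thesis
    by (simp add: spacetime_coeff_def fderiv_field_def)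
qed

lemma tderiv_eq_fderiv_field: "smooth_field u \<Longrightarrow> tderiv u = fderiv_field (0, 1) u"
  by (simp add: fun_eq_iff tderiv_def vector_derivative_at has_vector_derivative_tderiv)

lemma dext_eq_fderiv_field:
  assumes "smooth_field u"
  shows "dext u I x t = (\<Sum>i\<in>I. ext_sign i I *\<^sub>R fderiv_field (axis i 1, 0) u (I - {i}) x t)"
proof -
  have "pd i (u J) x t = fderiv_field (axis i 1, 0) u J x t" for i J
  proof -
    have "spacetime_coeff u J differentiable at (x, t)"
      by (rule smooth_field_differentiable[OF assms])
    from has_vector_derivative_along_line_0[OF this, of "(axis i 1, 0)" UNIV]
    have "((\<lambda>s. u J (x + s *\<^sub>R axis i 1) t) has_vector_derivative fderiv_field (axis i 1, 0) u J x t) (at 0)"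
      by (simp add: spacetime_coeff_def fderiv_field_def)
    then show ?thesis
      unfolding pd_def by (rule vector_derivative_at)
  qed
  then show ?thesis
    by (simp add: dext_def)
qed

lemma smooth_field_add: "smooth_field u \<Longrightarrow> smooth_field w \<Longrightarrow> smooth_field (\<lambda>I x t. u I x t + w I x t)"
  unfolding smooth_field_iff_Ck spacetime_coeff_def by (auto intro!: Ck_add)

lemma smooth_field_scaleR: "smooth_field u \<Longrightarrow> smooth_field (\<lambda>I x t. c *\<^sub>R u I x t)"
  unfolding smooth_field_iff_Ck spacetime_coeff_def by (auto intro!: Ck_scaleR)

lemma smooth_field_neg: "smooth_field u \<Longrightarrow> smooth_field (\<lambda>I x t. - u I x t)"
  using smooth_field_scaleR[of u "-1"] by simp

lemma smooth_field_lbr: "smooth_field u \<Longrightarrow> smooth_field w \<Longrightarrow> smooth_field (lbr u w)"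
  unfolding smooth_field_iff_Ck spacetime_coeff_def lbr_def wedge_with_def
  by (auto intro!: Ck_sum Ck_scaleR Ck_bilinear[OF bounded_bilinear_lbr_mat])

lemma smooth_field_dext:
  assumes "smooth_field u"
  shows "smooth_field (dext u)"
proof -
  have "spacetime_coeff (dext u) I =
      (\<lambda>p. \<Sum>i\<in>I. ext_sign i I *\<^sub>R spacetime_coeff (fderiv_field (axis i 1, 0) u) (I - {i}) p)" for I
    by (simp add: fun_eq_iff spacetime_coeff_def dext_eq_fderiv_field[OF assms])
  then show ?thesis
    unfolding smooth_field_iff_Ck
    by (auto intro!: Ck_sum Ck_scaleR smooth_field_Ck smooth_field_fderiv_field assms)
qed

lemma smooth_field_tderiv: "smooth_field u \<Longrightarrow> smooth_field (tderiv u)"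
  by (simp add: tderiv_eq_fderiv_field smooth_field_fderiv_field)

lemma smooth_field_cov_d: "smooth_field A \<Longrightarrow> smooth_field u \<Longrightarrow> smooth_field (cov_d A u)"
  unfolding cov_d_def by (intro smooth_field_add smooth_field_dext smooth_field_lbr)

lemma smooth_field_curvature: "smooth_field A \<Longrightarrow> smooth_field (curvature A)"
  unfolding curvature_def by (intro smooth_field_add smooth_field_scaleR smooth_field_dext smooth_field_lbr)

lemma smooth_field_op_field:
  assumes c: "\<And>J I. smooth_fun (\<lambda>x. c x J I)" and u: "smooth_field u"
  shows "smooth_field (op_field c u)"
  unfolding smooth_field_iff_Ck
proof (intro allI)
  fix J k
  have "Ck k (\<lambda>p::(real, 'a) vec \<times> real. c (fst p) J I)" for I
    using c[of J I] by (intro Ck_linear_comp[OF bounded_linear_fst]) (simp add: smooth_fun_def)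
  then have "Ck k (\<lambda>p. \<Sum>I\<in>UNIV. c (fst p) J I *\<^sub>R spacetime_coeff u I p)"
    by (intro Ck_sum Ck_bilinear[OF bounded_bilinear_scaleR] smooth_field_Ck u) simp_all
  then show "Ck k (spacetime_coeff (op_field c u) J)"
    by (simp add: spacetime_coeff_def[abs_def] op_field_def)
qed

lemma fderiv_field_add:
  assumes "smooth_field u" "smooth_field w"
  shows "fderiv_field v (\<lambda>I x t. u I x t + w I x t) I x t = fderiv_field v u I x t + fderiv_field v w I x t"
proof -
  have "(spacetime_coeff (\<lambda>I x t. u I x t + w I x t) I has_derivative
      (\<lambda>h. frechet_derivative (spacetime_coeff u I) (at (x, t)) h +
           frechet_derivative (spacetime_coeff w I) (at (x, t)) h)) (at (x, t))"
    using has_derivative_add[OF smooth_field_has_derivative[OF assms(1)] smooth_field_has_derivative[OF assms(2)]]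
    by (simp add: spacetime_coeff_def[abs_def])
  then show ?thesis
    by (simp add: fderiv_field_eqI) (simp add: fderiv_field_def)
qed

lemma fderiv_field_lbr:
  assumes u: "smooth_field u" and w: "smooth_field w"
  shows "fderiv_field v (lbr u w) I x t = lbr (fderiv_field v u) w I x t + lbr u (fderiv_field v w) I x t"
proof -
  have "spacetime_coeff (lbr u w) I =
      (\<lambda>p. \<Sum>J\<in>Pow I. perm_sign J (I - J) *\<^sub>R lbr_mat (spacetime_coeff u J p) (spacetime_coeff w (I - J) p))"
    by (simp add: spacetime_coeff_def lbr_def wedge_with_def fun_eq_iff)
  then have "(spacetime_coeff (lbr u w) I has_derivative (\<lambda>h. \<Sum>J\<in>Pow I. perm_sign J (I - J) *\<^sub>R
      (lbr_mat (spacetime_coeff u J (x, t)) (frechet_derivative (spacetime_coeff w (I - J)) (at (x, t)) h) +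
       lbr_mat (frechet_derivative (spacetime_coeff u J) (at (x, t)) h) (spacetime_coeff w (I - J) (x, t)))))
      (at (x, t))"
    by (auto intro!: has_derivative_sum has_derivative_scaleR_right
        bounded_bilinear.FDERIV[OF bounded_bilinear_lbr_mat] smooth_field_has_derivative u w)
  from fderiv_field_eqI[OF this, of v] show ?thesis
    by (simp add: lbr_def wedge_with_def fderiv_field_def spacetime_coeff_def
        scaleR_add_right sum.distrib)
qed

lemma fderiv_field_dext:
  assumes u: "smooth_field u"
  shows "fderiv_field v (dext u) = dext (fderiv_field v u)"
proof (intro ext)
  fix I x t
  have "spacetime_coeff (dext u) I =
      (\<lambda>p. \<Sum>i\<in>I. ext_sign i I *\<^sub>R spacetime_coeff (fderiv_field (axis i 1, 0) u) (I - {i}) p)"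
    by (simp add: fun_eq_iff spacetime_coeff_def dext_eq_fderiv_field[OF u])
  then have "(spacetime_coeff (dext u) I has_derivative (\<lambda>h. \<Sum>i\<in>I. ext_sign i I *\<^sub>R
      frechet_derivative (spacetime_coeff (fderiv_field (axis i 1, 0) u) (I - {i})) (at (x, t)) h)) (at (x, t))"
    by (auto intro!: has_derivative_sum has_derivative_scaleR_right smooth_field_has_derivative
        smooth_field_fderiv_field u)
  then have "fderiv_field v (dext u) I x t =
      (\<Sum>i\<in>I. ext_sign i I *\<^sub>R fderiv_field v (fderiv_field (axis i 1, 0) u) (I - {i}) x t)"
    by (simp add: fderiv_field_eqI) (simp add: fderiv_field_def)
  then show "fderiv_field v (dext u) I x t = dext (fderiv_field v u) I x t"
    by (simp add: dext_eq_fderiv_field smooth_field_fderiv_field u fderiv_field_commute[OF u, of v])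
qed

lemma tderiv_lbr:
  "smooth_field u \<Longrightarrow> smooth_field w \<Longrightarrow>
    tderiv (lbr u w) I x t = lbr (tderiv u) w I x t + lbr u (tderiv w) I x t"
  by (simp add: tderiv_eq_fderiv_field smooth_field_lbr fderiv_field_lbr)

lemma tderiv_dext: "smooth_field u \<Longrightarrow> tderiv (dext u) = dext (tderiv u)"
  by (simp add: tderiv_eq_fderiv_field smooth_field_dext fderiv_field_dext)

lemma dext_add:
  "smooth_field u \<Longrightarrow> smooth_field w \<Longrightarrow>
    dext (\<lambda>I x t. u I x t + w I x t) I x t = dext u I x t + dext w I x t"
  by (simp add: dext_eq_fderiv_field smooth_field_add fderiv_field_add scaleR_add_right sum.distrib)

lemma dext_dext:
  assumes u: "smooth_field u"
  shows "dext (dext u) I x t = 0"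
proof -
  let ?e = "\<lambda>i. (axis i 1, 0)"
  have "dext (dext u) I x t = (\<Sum>i\<in>I. ext_sign i I *\<^sub>R
      (\<Sum>j\<in>I - {i}. ext_sign j (I - {i}) *\<^sub>R fderiv_field (?e j) (fderiv_field (?e i) u) (I - {i} - {j}) x t))"
    by (simp add: dext_eq_fderiv_field smooth_field_dext smooth_field_fderiv_field u fderiv_field_dext)
  also have "\<dots> = 0"
    by (rule ext_sign_double_sum_symmetric_eq_0) (simp add: fderiv_field_commute[OF u])
  finally show ?thesis .
qed

lemma dext_lbr:
  assumes u: "smooth_field u" and w: "smooth_field w" and hu: "homog_field k u"
  shows "dext (lbr u w) I x t = lbr (dext u) w I x t + (-1::real) ^ k *\<^sub>R lbr u (dext w) I x t"
proof -
  let ?e = "\<lambda>i. (axis i 1, 0)"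
  have "dext (lbr u w) I x t =
      (\<Sum>i\<in>I. ext_sign i I *\<^sub>R wedge_with lbr_mat (\<lambda>K. fderiv_field (?e i) u K x t) (\<lambda>K. w K x t) (I - {i})) +
      (\<Sum>i\<in>I. ext_sign i I *\<^sub>R wedge_with lbr_mat (\<lambda>K. u K x t) (\<lambda>K. fderiv_field (?e i) w K x t) (I - {i}))"
    unfolding dext_eq_fderiv_field[OF smooth_field_lbr[OF u w]] fderiv_field_lbr[OF u w]
    by (simp add: lbr_def scaleR_add_right sum.distrib)
  also have "\<dots> = lbr (dext u) w I x t + (-1::real) ^ k *\<^sub>R lbr u (dext w) I x t"
  proof -
    have "homog (\<lambda>j. j = k) (\<lambda>K. u K x t)"
      using hu by (simp add: homog_field_def)
    then show ?thesis
      by (simp add: wedge_with_ext_sum_left[OF bounded_bilinear_lbr_mat]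
          wedge_with_ext_sum_right[OF bounded_bilinear_lbr_mat] lbr_def dext_eq_fderiv_field u w)
  qed
  finally show ?thesis .
qed

lemma homog_field_add: "homog_field k u \<Longrightarrow> homog_field k w \<Longrightarrow> homog_field k (\<lambda>I x t. u I x t + w I x t)"
  by (simp add: homog_field_def homog_def)

lemma homog_field_scaleR: "homog_field k u \<Longrightarrow> homog_field k (\<lambda>I x t. c *\<^sub>R u I x t)"
  by (simp add: homog_field_def homog_def)

lemma homog_field_neg: "homog_field k u \<Longrightarrow> homog_field k (\<lambda>I x t. - u I x t)"
  by (simp add: homog_field_def homog_def)

lemma homog_field_tderiv:
  assumes "homog_field k u"
  shows "homog_field k (tderiv u)"
  unfolding homog_field_def homog_def
proof (intro allI impI)
  fix x t and I :: "'a set"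
  assume "card I \<noteq> k"
  then have "(\<lambda>s. u I x s) = (\<lambda>s. 0)"
    using assms by (simp add: homog_field_def homog_def)
  then show "tderiv u I x t = 0"
    by (simp add: tderiv_def)
qed

lemma homog_field_dext:
  fixes u :: "('n::{finite,linorder}, 'm::finite) field"
  assumes "homog_field k u"
  shows "homog_field (Suc k) (dext u)"
  unfolding homog_field_def homog_def dext_def
proof (intro allI impI sum.neutral ballI)
  fix x t and I :: "'n set" and i
  assume "card I \<noteq> Suc k" "i \<in> I"
  moreover from \<open>i \<in> I\<close> have "card I > 0"
    by (auto simp: card_gt_0_iff)
  ultimately have "card (I - {i}) \<noteq> k"
    by (simp add: card_Diff_singleton)
  then show "ext_sign i I *\<^sub>R pd i (u (I - {i})) x t = 0"
    using assms by (simp add: homog_field_def homog_def pd_def)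
qed

lemma homog_field_lbr:
  fixes u :: "('n::{finite,linorder}, 'm::finite) field"
  assumes u: "homog_field k u" and w: "homog_field l w"
  shows "homog_field (k + l) (lbr u w)"
  unfolding homog_field_def homog_def lbr_def wedge_with_def
proof (intro allI impI sum.neutral ballI)
  fix x t and I J :: "'n set"
  assume "card I \<noteq> k + l" "J \<in> Pow I"
  then have "card J \<noteq> k \<or> card (I - J) \<noteq> l"
    by (auto simp: card_Diff_subset card_mono)
  then show "perm_sign J (I - J) *\<^sub>R lbr_mat (u J x t) (w (I - J) x t) = 0"
    using u w by (auto simp: homog_field_def homog_def bounded_bilinear.zero_left[OF bounded_bilinear_lbr_mat]
        bounded_bilinear.zero_right[OF bounded_bilinear_lbr_mat])
qed

lemma homog_field_cov_d:
  fixes A :: "('n::{finite,linorder}, 'm::finite) field"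
  assumes "homog_field 1 A" "homog_field k u"
  shows "homog_field (Suc k) (cov_d A u)"
proof -
  have "homog_field (1 + k) (lbr A u)"
    by (rule homog_field_lbr[OF assms])
  then show ?thesis
    unfolding cov_d_def using homog_field_add[OF homog_field_dext[OF assms(2)]] by simp
qed

lemma homog_field_curvature:
  fixes A :: "('n::{finite,linorder}, 'm::finite) field"
  assumes "homog_field 1 A"
  shows "homog_field 2 (curvature A)"
proof -
  have "homog_field (1 + 1) (lbr A A)"
    by (rule homog_field_lbr[OF assms assms])
  then show ?thesis
    unfolding curvature_def using homog_field_add[OF homog_field_dext[OF assms] homog_field_scaleR]
    by (simp add: numeral_2_eq_2)
qed

text \<open>Derivatives at points of \<open>closure \<Omega>\<close> only see the values on \<open>closure \<Omega>\<close>: they agree in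
  the open set \<open>\<Omega>\<close> and are continuous.\<close>
lemma fderiv_field_eq_on_closure:
  assumes u: "smooth_field u" and w: "smooth_field w" and "open \<Omega>"
    and eq: "\<And>I x t. x \<in> closure \<Omega> \<Longrightarrow> u I x t = w I x t" and x: "x \<in> closure \<Omega>"
  shows "fderiv_field v u I x t = fderiv_field v w I x t"
proof -
  have inside: "fderiv_field v u I y t - fderiv_field v w I y t = 0" if y: "y \<in> \<Omega>" for y
  proof -
    have "(spacetime_coeff w I has_derivative frechet_derivative (spacetime_coeff u I) (at (y, t))) (at (y, t))"
    proof (rule has_derivative_transform_within_open[OF smooth_field_has_derivative[OF u]])
      show "open (\<Omega> \<times> UNIV)" using \<open>open \<Omega>\<close> by (simp add: open_Times)
      show "(y, t) \<in> \<Omega> \<times> UNIV" using y by simp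
      fix p :: "(real, _) vec \<times> real" assume "p \<in> \<Omega> \<times> UNIV"
      then have "fst p \<in> closure \<Omega>" using closure_subset[of \<Omega>] by auto
      then show "spacetime_coeff u I p = spacetime_coeff w I p"
        by (simp add: spacetime_coeff_def eq)
    qed
    then show ?thesis
      by (simp add: fderiv_field_eqI) (simp add: fderiv_field_def)
  qed
  have cont: "continuous_on (closure \<Omega>) (\<lambda>y. fderiv_field v f I y t)" if f: "smooth_field f" for f
  proof -
    have "continuous_on UNIV (spacetime_coeff (fderiv_field v f) I)"
      using smooth_field_Ck[OF smooth_field_fderiv_field[OF f], of 0] by simp
    then have "continuous_on UNIV (\<lambda>y. spacetime_coeff (fderiv_field v f) I (y, t))"
      by (rule continuous_on_compose2) (auto intro!: continuous_intros)
    then show ?thesis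
      by (simp add: spacetime_coeff_def) (erule continuous_on_subset, simp)
  qed
  have "fderiv_field v u I x t - fderiv_field v w I x t = 0"
    by (rule continuous_constant_on_closure[OF continuous_on_diff[OF cont[OF u] cont[OF w]] inside x])
  then show ?thesis by simp
qed

lemma cov_d_eq_on_closure:
  assumes u: "smooth_field u" and w: "smooth_field w" and "open \<Omega>"
    and eq: "\<And>I x t. x \<in> closure \<Omega> \<Longrightarrow> u I x t = w I x t" and x: "x \<in> closure \<Omega>"
  shows "cov_d A u I x t = cov_d A w I x t"
proof -
  have "dext u I x t = dext w I x t"
    unfolding dext_eq_fderiv_field[OF u] dext_eq_fderiv_field[OF w]
    using fderiv_field_eq_on_closure[OF u w \<open>open \<Omega>\<close> eq x] by simp
  moreover have "lbr A u I x t = lbr A w I x t"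
    using eq[OF x] by (simp add: lbr_def)
  ultimately show ?thesis
    by (simp add: cov_d_def)
qed

section \<open>Covariant exterior calculus\<close>

lemma lbr_add_left: "lbr (\<lambda>I x t. u I x t + u' I x t) w I x t = lbr u w I x t + lbr u' w I x t"
  by (simp add: lbr_def wedge_with_add_left[OF bounded_bilinear_lbr_mat])

lemma lbr_add_right: "lbr u (\<lambda>I x t. w I x t + w' I x t) I x t = lbr u w I x t + lbr u w' I x t"
  by (simp add: lbr_def wedge_with_add_right[OF bounded_bilinear_lbr_mat])

lemma lbr_scaleR_left: "lbr (\<lambda>I x t. c *\<^sub>R u I x t) w I x t = c *\<^sub>R lbr u w I x t"
  by (simp add: lbr_def wedge_with_scaleR_left[OF bounded_bilinear_lbr_mat])

lemma lbr_neg_left: "lbr (\<lambda>I x t. - u I x t) w I x t = - lbr u w I x t"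
  by (simp add: lbr_def wedge_with_neg_left[OF bounded_bilinear_lbr_mat])

lemma lbr_zero_form_left:
  "homog_field 0 \<phi> \<Longrightarrow> lbr \<phi> u I x t = lbr_mat (\<phi> {} x t) (u I x t)"
  by (simp add: lbr_def homog_field_def wedge_with_degree0_left[OF bounded_bilinear_lbr_mat])

lemma tderiv_add:
  "smooth_field u \<Longrightarrow> smooth_field w \<Longrightarrow>
    tderiv (\<lambda>I x t. u I x t + w I x t) I x t = tderiv u I x t + tderiv w I x t"
  by (simp add: tderiv_eq_fderiv_field smooth_field_add fderiv_field_add)

lemma cov_d_add:
  "smooth_field u \<Longrightarrow> smooth_field w \<Longrightarrow>
    cov_d A (\<lambda>I x t. u I x t + w I x t) I x t = cov_d A u I x t + cov_d A w I x t"
  by (simp add: cov_d_def dext_add lbr_add_right)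

lemma tderiv_cov_d:
  assumes A: "smooth_field A" and u: "smooth_field u"
  shows "tderiv (cov_d A u) I x t = cov_d A (tderiv u) I x t + lbr (tderiv A) u I x t"
  unfolding cov_d_def tderiv_add[OF smooth_field_dext[OF u] smooth_field_lbr[OF A u]]
  by (simp add: tderiv_dext[OF u] tderiv_lbr[OF A u])

lemma cov_d_lbr_zero_form:
  assumes A: "smooth_field A" and \<phi>: "smooth_field \<phi>" "homog_field 0 \<phi>" and u: "smooth_field u"
  shows "cov_d A (lbr \<phi> u) I x t = lbr (cov_d A \<phi>) u I x t + lbr \<phi> (cov_d A u) I x t"
proof -
  have "lbr A (lbr \<phi> u) I x t = lbr (lbr A \<phi>) u I x t + lbr \<phi> (lbr A u) I x t"
    unfolding lbr_def using \<phi>(2)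
    by (intro wedge_lbr_zero_form_jacobi) (simp add: homog_field_def)
  then show ?thesis
    by (simp add: cov_d_def dext_lbr[OF \<phi>(1) u \<phi>(2)] lbr_add_left lbr_add_right)
qed

lemma cov_d_cov_d:
  assumes A: "smooth_field A" "homog_field 1 A" and h: "smooth_field h"
  shows "cov_d A (cov_d A h) I x t = lbr (curvature A) h I x t"
proof -
  have "dext (cov_d A h) I x t = lbr (dext A) h I x t - lbr A (dext h) I x t"
    unfolding cov_d_def dext_add[OF smooth_field_dext[OF h] smooth_field_lbr[OF A(1) h]]
    by (simp add: dext_dext[OF h] dext_lbr[OF A(1) h A(2)])
  moreover have "lbr A (lbr A h) I x t = (1/2) *\<^sub>R lbr (lbr A A) h I x t"
  proof -
    have "2 *\<^sub>R lbr A (lbr A h) I x t = lbr (lbr A A) h I x t"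
      unfolding lbr_def using A(2)
      by (intro wedge_lbr_one_form_twice) (simp add: homog_field_def)
    from this[symmetric] show ?thesis by simp
  qed
  ultimately show ?thesis
    unfolding cov_d_def[of A "cov_d A h"] curvature_def
    by (simp add: lbr_add_left lbr_add_right lbr_scaleR_left cov_d_def)
qed

text \<open>The second term is \<open>- [E \<and> D]\<close> for the electric field \<open>E = - (\<partial>\<^sub>t A + d\<^sub>A \<phi>)\<close>.\<close>
lemma tderiv_cov_d_of_evolution:
  assumes "open \<Omega>" and A: "smooth_field A" "homog_field 1 A"
    and \<phi>: "smooth_field \<phi>" "homog_field 0 \<phi>" and D: "smooth_field D" and H: "smooth_field H"
    and evol: "\<And>I x t. x \<in> closure \<Omega> \<Longrightarrow> tderiv D I x t - lbr \<phi> D I x t = cov_d A H I x t"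
    and x: "x \<in> closure \<Omega>"
  shows "tderiv (cov_d A D) I x t = lbr \<phi> (cov_d A D) I x t
    - lbr (\<lambda>I x t. - (tderiv A I x t + cov_d A \<phi> I x t)) D I x t + lbr (curvature A) H I x t"
proof -
  have "cov_d A (tderiv D) I x t = cov_d A (\<lambda>I x t. lbr \<phi> D I x t + cov_d A H I x t) I x t"
    by (rule cov_d_eq_on_closure[OF smooth_field_tderiv[OF D]
          smooth_field_add[OF smooth_field_lbr[OF \<phi>(1) D] smooth_field_cov_d[OF A(1) H]] \<open>open \<Omega>\<close> _ x])
      (simp add: evol[symmetric])
  also have "\<dots> = lbr (cov_d A \<phi>) D I x t + lbr \<phi> (cov_d A D) I x t + lbr (curvature A) H I x t"
    by (simp add: cov_d_add[OF smooth_field_lbr[OF \<phi>(1) D] smooth_field_cov_d[OF A(1) H]]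
        cov_d_lbr_zero_form[OF A(1) \<phi> D] cov_d_cov_d[OF A H])
  finally show ?thesis
    unfolding tderiv_cov_d[OF A(1) D] lbr_neg_left lbr_add_left by simp
qed

lemma lbr_op_field_self:
  assumes "sym_iso_field k S c" "x \<in> S" "homog_field k u"
  shows "lbr u (op_field c u) I x t = 0"
  unfolding lbr_def op_field_def
  by (rule wedge_lbr_symmetric_op_self) (use assms in \<open>auto simp: sym_iso_field_def homog_field_def\<close>)

lemma ipw_hodge_self: "ipw u (hodge u) UNIV x t = (\<Sum>J\<in>UNIV. ip_mat (u J x t) (u J x t))"
proof -
  have "ipw u (hodge u) UNIV x t =
      (\<Sum>J\<in>Pow UNIV. (perm_sign J (UNIV - J) * perm_sign J (UNIV - J)) * ip_mat (u J x t) (u J x t))"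
    unfolding ipw_def wedge_with_def hodge_def
    by (simp add: ip_mat_eq_inner Compl_eq_Diff_UNIV[symmetric] double_complement mult.assoc)
  then show ?thesis
    by (simp add: perm_sign_square)
qed

lemma fnorm_constant_of_rotation:
  assumes deriv: "\<And>I t. ((\<lambda>s. u I x s) has_vector_derivative lbr_mat (p t) (u I x t)) (at t)"
    and skew: "\<And>t. madj (p t) = - p t"
  shows "fnorm u x s = fnorm u x t"
proof -
  define N where "N t = (\<Sum>J\<in>UNIV. u J x t \<bullet> u J x t)" for t
  have "(N has_real_derivative 0) (at t)" for t
  proof -
    have "((\<lambda>t. u J x t \<bullet> u J x t) has_vector_derivative
        u J x t \<bullet> lbr_mat (p t) (u J x t) + lbr_mat (p t) (u J x t) \<bullet> u J x t) (at t)" for J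
      by (rule bounded_bilinear.has_vector_derivative[OF bounded_bilinear_inner deriv deriv])
    moreover have "u J x t \<bullet> lbr_mat (p t) (u J x t) = 0" for J
      using ip_mat_lbr_mat_skew[OF skew] by (simp add: ip_mat_eq_inner)
    ultimately have "((\<lambda>t. u J x t \<bullet> u J x t) has_real_derivative 0) (at t)" for J
      by (simp add: has_real_derivative_iff_has_vector_derivative inner_commute)
    then show ?thesis
      unfolding N_def using DERIV_sum[of UNIV] by fastforce
  qed
  then have "N s = N t"
    by (intro DERIV_isconst_all) blast
  then show ?thesis
    by (simp add: fnorm_def ipw_hodge_self N_def ip_mat_eq_inner)
qed

lemma fnorm_constant_of_transport:
  assumes R: "smooth_field R" and \<phi>: "homog_field 0 \<phi>"
    and transport: "\<And>I t. tderiv R I x t = lbr \<phi> R I x t"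
    and skew: "\<And>t. madj (\<phi> {} x t) = - \<phi> {} x t"
    and \<rho>: "\<And>I. \<rho> I x = R I x"
  shows "fnorm \<rho> x s = fnorm \<rho> x t"
proof (rule fnorm_constant_of_rotation)
  show "((\<lambda>s. \<rho> I x s) has_vector_derivative lbr_mat (\<phi> {} x t) (\<rho> I x t)) (at t)" for I t
    using has_vector_derivative_tderiv[OF R, of I x t] transport[of I t]
    by (simp add: \<rho> tderiv_eq_fderiv_field[OF R] lbr_zero_form_left[OF \<phi>])
qed (rule skew)

lemma tderiv_cov_d_Yang_Mills:
  assumes "open \<Omega>" and A: "smooth_field A" "homog_field 1 A"
    and \<phi>: "smooth_field \<phi>" "homog_field 0 \<phi>"
    and eps: "sym_iso_field 1 (closure \<Omega>) eps" and mu: "sym_iso_field 2 (closure \<Omega>) mu_inv"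
    and E: "E = (\<lambda>I x t. - (tderiv A I x t + cov_d A \<phi> I x t))" and B: "B = curvature A"
    and D: "D = op_field eps E" and H: "H = op_field mu_inv B"
    and evol: "\<And>I x t. x \<in> closure \<Omega> \<Longrightarrow> tderiv D I x t - lbr \<phi> D I x t = cov_d A H I x t"
    and x: "x \<in> closure \<Omega>"
  shows "tderiv (cov_d A D) I x t = lbr \<phi> (cov_d A D) I x t"
proof -
  have "homog_field 1 (cov_d A \<phi>)"
    using homog_field_cov_d[OF A(2) \<phi>(2)] by simp
  then have smE: "smooth_field E" and hE: "homog_field 1 E"
    unfolding E by (intro smooth_field_neg smooth_field_add smooth_field_tderiv smooth_field_cov_d A \<phi>
        homog_field_neg homog_field_add homog_field_tderiv)+
  have smB: "smooth_field B" and hB: "homog_field 2 B"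
    unfolding B by (rule smooth_field_curvature[OF A(1)], rule homog_field_curvature[OF A(2)])
  have "smooth_field D" "smooth_field H"
    using eps mu unfolding D H sym_iso_field_def by (simp_all add: smooth_field_op_field smE smB)
  moreover have "lbr E D I x t = 0" "lbr B H I x t = 0"
    unfolding D H using lbr_op_field_self eps mu x hE hB by blast+
  ultimately show ?thesis
    using tderiv_cov_d_of_evolution[OF \<open>open \<Omega>\<close> A \<phi> _ _ evol x]
    unfolding E[symmetric] B[symmetric] by simp
qed

theorem proposition2p19:
  fixes \<Omega> :: "((real, 'n::{finite,linorder}) vec) set"
    and G :: "((complex, 'm::finite) vec^'m) set"
    and A \<phi> \<rho> :: "('n, 'm) field"
    and E B D H :: "('n, 'm) field"
    and eps mu_inv :: "(real, 'n) vec \<Rightarrow> 'n set \<Rightarrow> 'n set \<Rightarrow> real"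
  assumes "bounded_lipschitz_domain \<Omega>"
    and "compact_unitary_group G"
    and "smooth_field A" and "\<And>x t. homog (\<lambda>k. k = 1) (\<lambda>I. A I x t)"
    and "\<And>I x t. x \<in> closure \<Omega> \<Longrightarrow> A I x t \<in> lie_algebra G"
    and "smooth_field \<phi>" and "\<And>x t. homog (\<lambda>k. k = 0) (\<lambda>I. \<phi> I x t)"
    and "\<And>I x t. x \<in> closure \<Omega> \<Longrightarrow> \<phi> I x t \<in> lie_algebra G"
    and "sym_iso_field 1 (closure \<Omega>) eps"
    and "sym_iso_field 2 (closure \<Omega>) mu_inv"
    and "E = (\<lambda>I x t. - (tderiv A I x t + cov_d A \<phi> I x t))"
    and "B = curvature A"
    and "D = op_field eps E"
    and "H = op_field mu_inv B"
    and "\<And>I x t. x \<in> closure \<Omega> \<Longrightarrow> tderiv D I x t - lbr \<phi> D I x t = cov_d A H I x t"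
    and "\<And>I x t. x \<in> closure \<Omega> \<Longrightarrow> cov_d A D I x t = \<rho> I x t"
  shows "(\<forall>x\<in>closure \<Omega>. \<forall>I t. tderiv \<rho> I x t = lbr \<phi> \<rho> I x t) \<and>
         (\<forall>x\<in>closure \<Omega>. \<forall>s t. fnorm \<rho> x s = fnorm \<rho> x t)"
proof -
  have "open \<Omega>"
    using assms(1) by (simp add: bounded_lipschitz_domain_def)
  have A: "smooth_field A" "homog_field 1 A" and \<phi>: "smooth_field \<phi>" "homog_field 0 \<phi>"
    using assms(3,4,6,7) by (simp_all add: homog_field_def)
  have transport: "tderiv (cov_d A D) I x t = lbr \<phi> (cov_d A D) I x t" if "x \<in> closure \<Omega>" for I x t
    by (rule tderiv_cov_d_Yang_Mills[OF \<open>open \<Omega>\<close> A \<phi> assms(9-15) that])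
  have D: "smooth_field D"
    unfolding assms(11,13)
    by (intro smooth_field_op_field smooth_field_neg smooth_field_add smooth_field_tderiv
        smooth_field_cov_d A(1) \<phi>(1)) (use assms(9) in \<open>simp add: sym_iso_field_def\<close>)
  have \<rho>: "\<rho> I x = cov_d A D I x" if "x \<in> closure \<Omega>" for I x
    using assms(16)[OF that] by auto
  show ?thesis
  proof (intro conjI ballI allI)
    fix x I t assume x: "x \<in> closure \<Omega>"
    show "tderiv \<rho> I x t = lbr \<phi> \<rho> I x t"
      using transport[OF x] by (simp add: tderiv_def lbr_def \<rho>[OF x])
  next
    fix x s t assume x: "x \<in> closure \<Omega>"
    show "fnorm \<rho> x s = fnorm \<rho> x t"
      by (rule fnorm_constant_of_transport[OF smooth_field_cov_d[OF A(1) D] \<phi>(2)])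
        (simp_all add: transport[OF x] lie_algebra_skew[OF assms(2) assms(8)[OF x]] \<rho>[OF x])
  qed
qed

end
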